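(* Let $G$ be a progressive graph and $\prec$ a planar order on $G$. Then there is an upward BP-embedding $\phi$ of $G$ such that $\prec=\prec_\phi$.
   Context: A progressive graph is a finite directed acyclic graph (parallel edges allowed) in which every source and every sink has degree one. Degree-one vertices are boundary vertices, the others internal vertices. An input edge is an edge whose initial vertex is a boundary vertex; an output edge is one whose terminal vertex is a boundary vertex. For edges write $e\to e'$ if $e\neq e'$ and there is a directed path whose first edge is $e$ and last edge is $e'$. For a vertex $v$, $I(v)$, $O(v)$ are its sets of incoming and outgoing edges. A planar order on $G$ is a linear order $\prec$ on $E(G)$ such that (P1) $e_1\to e_2$ implies $e_1\prec e_2$; (P2) if $e_1\prec e_2\prec e_3$ and $e_1\to e_3$, then $e_1\to e_2$ or $e_2\to e_3$. Composition: let $(G_1,\prec_1)$, $(G_2,\prec_2)$ be progressive graphs with linear orders on their edges, where $G_1$ has output edges $o_1\prec_1\cdots\prec_1 o_n$ and $G_2$ has input edges $i_1\prec_2\cdots\prec_2 i_n$. The graph $G_2\circ G_1$ is obtained from $G_1\sqcup G_2$ by deleting the sinks of $G_1$, the sources of $G_2$ and the edges $o_k,i_k$, and adding for each $k$ a new edge $\overline{e_k}$ from the initial vertex of $o_k$ to the terminal vertex of $i_k$. Let $Q_1=\{e: e\prec_1 o_1\}$, $Q_k=\{e: o_{k-1}\prec_1 e\prec_1 o_k\}$ ($2\le k\le n$), $P_k=\{e: i_k\prec_2 e\prec_2 i_{k+1}\}$ ($1\le k\le n-1$), $P_n=\{e: i_n\prec_2 e\}$. Then $\prec_2\circ\prec_1$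 is the linear order on $E(G_2\circ G_1)$ listing $Q_1,\{\overline{e_1}\},P_1,\dots,Q_n,\{\overline{e_n}\},P_n$ consecutively, each $Q_k$ ordered by $\prec_1$ and each $P_k$ by $\prec_2$. A BP-embedding of $G$ is an embedding of $G$ into a closed rectangle $R=[a,b]\times[c,d]\subset\mathbb{R}^2$ (vertices to distinct points, edges to simple arcs meeting only at common endpoints) such that all sources lie on the top side, all sinks on the bottom side, and everything else lies in the interior of $R$. It is upward if the $y$-coordinate strictly decreases along every edge from its initial to its terminal vertex. $G$ is elementary if each connected component has at most one internal vertex. Canonical order for elementary $G$ with upward BP-embedding $\phi$: each component is a single edge or a star with one internal vertex $v$; $\prec_\phi$ lists components from left to right, and within a star lists $I(v)$ from left to right followed by $O(v)$ from left to right. For arbitrary upward $\phi$: choose heights $d=y_0>\cdots>y_n=c$ with no vertex on the lines $y=y_j$ ($0<j<n$) and at most one internal vertex per strip; cutting edges at these lines exhibits $\phi$ as a vertical stack of elementary upward BP-embeddings $\phi_1$ (top),\dots,$\phi_n$ (bottom) of graphs $G_1,\dots,G_n$ with $G=G_n\circ\cdots\circ G_1$, and $\prec_\phi:=\prec_{\phi_n}\circ\cdots\circ\prec_{\phi_1}$. *)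

theory Defs
  imports "HOL-Analysis.Analysis"
begin

text \<open>A graph is given by a vertex set V, an edge set E and maps src, tgt
  (initial and terminal vertex); parallel edges are allowed.\<close>

definition in_edges :: "'e set \<Rightarrow> ('e \<Rightarrow> 'v) \<Rightarrow> 'v \<Rightarrow> 'e set" where
  "in_edges E tgt v = {e \<in> E. tgt e = v}"

definition out_edges :: "'e set \<Rightarrow> ('e \<Rightarrow> 'v) \<Rightarrow> 'v \<Rightarrow> 'e set" where
  "out_edges E src v = {e \<in> E. src e = v}"

definition degree :: "'e set \<Rightarrow> ('e \<Rightarrow> 'v) \<Rightarrow> ('e \<Rightarrow> 'v) \<Rightarrow> 'v \<Rightarrow> nat" where
  "degree E src tgt v = card (in_edges E tgt v) + card (out_edges E src v)"

definition is_source :: "'v set \<Rightarrow> 'e set \<Rightarrow> ('e \<Rightarrow> 'v) \<Rightarrow> 'v \<Rightarrow> bool" where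
  "is_source V E tgt v \<longleftrightarrow> v \<in> V \<and> in_edges E tgt v = {}"

definition is_sink :: "'v set \<Rightarrow> 'e set \<Rightarrow> ('e \<Rightarrow> 'v) \<Rightarrow> 'v \<Rightarrow> bool" where
  "is_sink V E src v \<longleftrightarrow> v \<in> V \<and> out_edges E src v = {}"

definition progressive_graph :: "'v set \<Rightarrow> 'e set \<Rightarrow> ('e \<Rightarrow> 'v) \<Rightarrow> ('e \<Rightarrow> 'v) \<Rightarrow> bool" where
  "progressive_graph V E src tgt \<longleftrightarrow>
     finite V \<and> finite E \<and>
     (\<forall>e\<in>E. src e \<in> V \<and> tgt e \<in> V) \<and>
     acyclic {(src e, tgt e) | e. e \<in> E} \<and>
     (\<forall>v. is_source V E tgt v \<longrightarrow> degree E src tgt v = 1) \<and>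
     (\<forall>v. is_sink V E src v \<longrightarrow> degree E src tgt v = 1)"

definition internal_vertex :: "'v set \<Rightarrow> 'e set \<Rightarrow> ('e \<Rightarrow> 'v) \<Rightarrow> ('e \<Rightarrow> 'v) \<Rightarrow> 'v \<Rightarrow> bool" where
  "internal_vertex V E src tgt v \<longleftrightarrow> v \<in> V \<and> degree E src tgt v \<noteq> 1"

definition edge_reach :: "'e set \<Rightarrow> ('e \<Rightarrow> 'v) \<Rightarrow> ('e \<Rightarrow> 'v) \<Rightarrow> 'e \<Rightarrow> 'e \<Rightarrow> bool" where
  "edge_reach E src tgt e e' \<longleftrightarrow>
     e \<noteq> e' \<and> (e, e') \<in> {(a, b). a \<in> E \<and> b \<in> E \<and> tgt a = src b}\<^sup>+"

definition strict_linear_on :: "'e set \<Rightarrow> ('e \<times> 'e) set \<Rightarrow> bool" where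
  "strict_linear_on E r \<longleftrightarrow> r \<subseteq> E \<times> E \<and> trans r \<and> (\<forall>e\<in>E. (e, e) \<notin> r) \<and>
     (\<forall>e\<in>E. \<forall>e'\<in>E. e \<noteq> e' \<longrightarrow> (e, e') \<in> r \<or> (e', e) \<in> r)"

definition planar_order :: "'e set \<Rightarrow> ('e \<Rightarrow> 'v) \<Rightarrow> ('e \<Rightarrow> 'v) \<Rightarrow> ('e \<times> 'e) set \<Rightarrow> bool" where
  "planar_order E src tgt prec \<longleftrightarrow>
     strict_linear_on E prec \<and>
     (\<forall>e1 e2. edge_reach E src tgt e1 e2 \<longrightarrow> (e1, e2) \<in> prec) \<and>
     (\<forall>e1 e2 e3. (e1, e2) \<in> prec \<and> (e2, e3) \<in> prec \<and> edge_reach E src tgt e1 e3 \<longrightarrow>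
        edge_reach E src tgt e1 e2 \<or> edge_reach E src tgt e2 e3)"

type_synonym point = "real \<times> real"

text \<open>pos places vertices, gam e is a simple arc (parametrised on [0,1]) for edge e;
  the rectangle is [a,b] x [c,d].\<close>
definition BP_embedding ::
  "'v set \<Rightarrow> 'e set \<Rightarrow> ('e \<Rightarrow> 'v) \<Rightarrow> ('e \<Rightarrow> 'v) \<Rightarrow> ('v \<Rightarrow> point) \<Rightarrow> ('e \<Rightarrow> real \<Rightarrow> point)
   \<Rightarrow> real \<Rightarrow> real \<Rightarrow> real \<Rightarrow> real \<Rightarrow> bool" where
  "BP_embedding V E src tgt pos gam a b c d \<longleftrightarrow>
     a < b \<and> c < d \<and>
     inj_on pos V \<and>
     (\<forall>e\<in>E. arc (gam e) \<and> pathstart (gam e) = pos (src e) \<and> pathfinish (gam e) = pos (tgt e)) \<and>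
     (\<forall>e\<in>E. \<forall>e'\<in>E. e \<noteq> e' \<longrightarrow>
        path_image (gam e) \<inter> path_image (gam e') \<subseteq> pos ` ({src e, tgt e} \<inter> {src e', tgt e'})) \<and>
     (\<forall>v\<in>V. \<forall>e\<in>E. pos v \<in> path_image (gam e) \<longrightarrow> v = src e \<or> v = tgt e) \<and>
     (\<forall>v. is_source V E tgt v \<longrightarrow> snd (pos v) = d \<and> a \<le> fst (pos v) \<and> fst (pos v) \<le> b) \<and>
     (\<forall>v. is_sink V E src v \<longrightarrow> snd (pos v) = c \<and> a \<le> fst (pos v) \<and> fst (pos v) \<le> b) \<and>
     (\<forall>v. internal_vertex V E src tgt v \<longrightarrow>
        a < fst (pos v) \<and> fst (pos v) < b \<and> c < snd (pos v) \<and> snd (pos v) < d) \<and>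
     (\<forall>e\<in>E. \<forall>t. 0 < t \<and> t < 1 \<longrightarrow>
        a < fst (gam e t) \<and> fst (gam e t) < b \<and> c < snd (gam e t) \<and> snd (gam e t) < d)"

definition upward_BP_embedding ::
  "'v set \<Rightarrow> 'e set \<Rightarrow> ('e \<Rightarrow> 'v) \<Rightarrow> ('e \<Rightarrow> 'v) \<Rightarrow> ('v \<Rightarrow> point) \<Rightarrow> ('e \<Rightarrow> real \<Rightarrow> point)
   \<Rightarrow> real \<Rightarrow> real \<Rightarrow> real \<Rightarrow> real \<Rightarrow> bool" where
  "upward_BP_embedding V E src tgt pos gam a b c d \<longleftrightarrow>
     BP_embedding V E src tgt pos gam a b c d \<and>
     (\<forall>e\<in>E. \<forall>s t. 0 \<le> s \<and> s < t \<and> t \<le> 1 \<longrightarrow> snd (gam e t) < snd (gam e s))"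

text \<open>Heights d = ys 0 > ys 1 > ... > ys n = c; no vertex on the inner lines;
  at most one internal vertex in each (open) strip j, between ys j and ys (j-1).\<close>
definition valid_cut ::
  "'v set \<Rightarrow> 'e set \<Rightarrow> ('e \<Rightarrow> 'v) \<Rightarrow> ('e \<Rightarrow> 'v) \<Rightarrow> ('v \<Rightarrow> point) \<Rightarrow> real \<Rightarrow> real
   \<Rightarrow> nat \<Rightarrow> (nat \<Rightarrow> real) \<Rightarrow> bool" where
  "valid_cut V E src tgt pos c d n ys \<longleftrightarrow>
     1 \<le> n \<and> ys 0 = d \<and> ys n = c \<and> (\<forall>j<n. ys (Suc j) < ys j) \<and>
     (\<forall>j. 0 < j \<and> j < n \<longrightarrow> (\<forall>v\<in>V. snd (pos v) \<noteq> ys j)) \<and>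
     (\<forall>j\<in>{1..n}. \<forall>v w. internal_vertex V E src tgt v \<and> internal_vertex V E src tgt w \<and>
         ys j < snd (pos v) \<and> snd (pos v) < ys (j - 1) \<and>
         ys j < snd (pos w) \<and> snd (pos w) < ys (j - 1) \<longrightarrow> v = w)"

definition xcross :: "('e \<Rightarrow> real \<Rightarrow> point) \<Rightarrow> 'e \<Rightarrow> real \<Rightarrow> real" where
  "xcross gam e y = fst (gam e (THE t. 0 \<le> t \<and> t \<le> 1 \<and> snd (gam e t) = y))"

text \<open>Edges of the elementary graph of strip j (pieces of edges of G meeting the strip).\<close>
definition strip_edges ::
  "'e set \<Rightarrow> ('e \<Rightarrow> 'v) \<Rightarrow> ('e \<Rightarrow> 'v) \<Rightarrow> ('v \<Rightarrow> point) \<Rightarrow> (nat \<Rightarrow> real) \<Rightarrow> nat \<Rightarrow> 'e set" where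
  "strip_edges E src tgt pos ys j =
     {e \<in> E. snd (pos (tgt e)) < ys (j - 1) \<and> ys j < snd (pos (src e))}"

text \<open>Edges crossing the cut line at height ys j (outputs of strip j = inputs of strip j+1).\<close>
definition cut_edges ::
  "'e set \<Rightarrow> ('e \<Rightarrow> 'v) \<Rightarrow> ('e \<Rightarrow> 'v) \<Rightarrow> ('v \<Rightarrow> point) \<Rightarrow> (nat \<Rightarrow> real) \<Rightarrow> nat \<Rightarrow> 'e set" where
  "cut_edges E src tgt pos ys j =
     {e \<in> E. snd (pos (tgt e)) < ys j \<and> ys j < snd (pos (src e))}"

definition strip_vertex ::
  "'v set \<Rightarrow> 'e set \<Rightarrow> ('e \<Rightarrow> 'v) \<Rightarrow> ('e \<Rightarrow> 'v) \<Rightarrow> ('v \<Rightarrow> point) \<Rightarrow> (nat \<Rightarrow> real) \<Rightarrow> nat \<Rightarrow> 'v \<Rightarrow> bool" where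
  "strip_vertex V E src tgt pos ys j v \<longleftrightarrow>
     internal_vertex V E src tgt v \<and> ys j < snd (pos v) \<and> snd (pos v) < ys (j - 1)"

definition in_star ::
  "'v set \<Rightarrow> 'e set \<Rightarrow> ('e \<Rightarrow> 'v) \<Rightarrow> ('e \<Rightarrow> 'v) \<Rightarrow> ('v \<Rightarrow> point) \<Rightarrow> (nat \<Rightarrow> real) \<Rightarrow> nat \<Rightarrow> 'e \<Rightarrow> bool" where
  "in_star V E src tgt pos ys j e \<longleftrightarrow>
     (\<exists>v. strip_vertex V E src tgt pos ys j v \<and> (src e = v \<or> tgt e = v))"

text \<open>Left-to-right position of the component of e in strip j: x-coordinate at the top
  line of the strip (for the star: leftmost incoming edge).\<close>
definition comp_key ::
  "'v set \<Rightarrow> 'e set \<Rightarrow> ('e \<Rightarrow> 'v) \<Rightarrow> ('e \<Rightarrow> 'v) \<Rightarrow> ('v \<Rightarrow> point) \<Rightarrow> ('e \<Rightarrow> real \<Rightarrow> point)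
   \<Rightarrow> (nat \<Rightarrow> real) \<Rightarrow> nat \<Rightarrow> 'e \<Rightarrow> real" where
  "comp_key V E src tgt pos gam ys j e =
     (if in_star V E src tgt pos ys j e
      then (let v = (THE v. strip_vertex V E src tgt pos ys j v) in
            Min ((\<lambda>e'. xcross gam e' (ys (j - 1))) ` in_edges E tgt v))
      else xcross gam e (ys (j - 1)))"

text \<open>Canonical order of the elementary embedding in strip j: components from left to
  right; within the star, I(v) from left to right, then O(v) from left to right.\<close>
definition canon_less ::
  "'v set \<Rightarrow> 'e set \<Rightarrow> ('e \<Rightarrow> 'v) \<Rightarrow> ('e \<Rightarrow> 'v) \<Rightarrow> ('v \<Rightarrow> point) \<Rightarrow> ('e \<Rightarrow> real \<Rightarrow> point)
   \<Rightarrow> (nat \<Rightarrow> real) \<Rightarrow> nat \<Rightarrow> 'e \<Rightarrow> 'e \<Rightarrow> bool" where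
  "canon_less V E src tgt pos gam ys j e e' \<longleftrightarrow>
     e \<in> strip_edges E src tgt pos ys j \<and> e' \<in> strip_edges E src tgt pos ys j \<and>
     (comp_key V E src tgt pos gam ys j e < comp_key V E src tgt pos gam ys j e' \<or>
      (in_star V E src tgt pos ys j e \<and> in_star V E src tgt pos ys j e' \<and>
       (let v = (THE v. strip_vertex V E src tgt pos ys j v) in
         (tgt e = v \<and> src e' = v) \<or>
         (tgt e = v \<and> tgt e' = v \<and> xcross gam e (ys (j - 1)) < xcross gam e' (ys (j - 1))) \<or>
         (src e = v \<and> src e' = v \<and> xcross gam e (ys j) < xcross gam e' (ys j)))))"

definition canon_list ::
  "'v set \<Rightarrow> 'e set \<Rightarrow> ('e \<Rightarrow> 'v) \<Rightarrow> ('e \<Rightarrow> 'v) \<Rightarrow> ('v \<Rightarrow> point) \<Rightarrow> ('e \<Rightarrow> real \<Rightarrow> point)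
   \<Rightarrow> (nat \<Rightarrow> real) \<Rightarrow> nat \<Rightarrow> 'e list" where
  "canon_list V E src tgt pos gam ys j =
     (THE L. distinct L \<and> set L = strip_edges E src tgt pos ys j \<and>
             sorted_wrt (canon_less V E src tgt pos gam ys j) L)"

text \<open>Split a list at the elements of X: xs = s0 @ [x1] @ s1 @ ... @ [xn] @ sn
  is returned as (s0, [(x1,s1), ..., (xn,sn)]).\<close>
fun cut_segs :: "'e set \<Rightarrow> 'e list \<Rightarrow> 'e list \<times> ('e \<times> 'e list) list" where
  "cut_segs X [] = ([], [])"
| "cut_segs X (x # xs) =
     (let (s, r) = cut_segs X xs in if x \<in> X then ([], (x, s) # r) else (x # s, r))"

text \<open>The order prec2 o prec1: C lists E(G1) by prec1, L lists E(G2) by prec2, X is the set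
  of glued edges (outputs o_k of G1, which are the inputs i_k of G2). The result lists
  Q_1, e_1, P_1, ..., Q_n, e_n, P_n; the new edge e_k is named by o_k.\<close>
definition compose_order :: "'e set \<Rightarrow> 'e list \<Rightarrow> 'e list \<Rightarrow> 'e list" where
  "compose_order X C L =
     (let (q0, rc) = cut_segs X C;
          (p0, rl) = cut_segs X L;
          Qs = q0 # map snd (butlast rc);
          Os = map fst rc;
          Ps = map snd rl
      in concat (map (\<lambda>(q, x, p). q @ [x] @ p) (zip Qs (zip Os Ps))))"

fun stack_order ::
  "(nat \<Rightarrow> 'e list) \<Rightarrow> (nat \<Rightarrow> 'e set) \<Rightarrow> nat \<Rightarrow> 'e list" where
  "stack_order L X 0 = []"
| "stack_order L X (Suc 0) = L 1"
| "stack_order L X (Suc (Suc j)) = compose_order (X (Suc j)) (stack_order L X (Suc j)) (L (Suc (Suc j)))"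

definition list_order :: "'e list \<Rightarrow> ('e \<times> 'e) set" where
  "list_order xs = {(xs ! i, xs ! k) | i k. i < k \<and> k < length xs}"

definition embedding_order ::
  "'v set \<Rightarrow> 'e set \<Rightarrow> ('e \<Rightarrow> 'v) \<Rightarrow> ('e \<Rightarrow> 'v) \<Rightarrow> ('v \<Rightarrow> point) \<Rightarrow> ('e \<Rightarrow> real \<Rightarrow> point)
   \<Rightarrow> nat \<Rightarrow> (nat \<Rightarrow> real) \<Rightarrow> ('e \<times> 'e) set" where
  "embedding_order V E src tgt pos gam n ys =
     list_order (stack_order (canon_list V E src tgt pos gam ys) (cut_edges E src tgt pos ys) n)"

end

theory Submission
  imports Defs
begin

text \<open>
  Write \<open>rank e\<close> for the position of e in the planar order. The embedding draws each edge e
  as the vertical line at abscissa \<open>rank e\<close>, bent linearly towards its endpoints within height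
  1/3 of an internal endpoint. An internal vertex v sits at height \<open>|E| - rank c\<close> above
  abscissa \<open>rank c\<close>, where c is the first outgoing edge of v; sources sit at height \<open>|E| + 1\<close>
  and sinks at height 0, above the abscissa of their edge. Heights decrease along edges, since
  the first outgoing edge of \<open>tgt e\<close> comes after e by (P1).

  At any height that carries no vertex the edges cross from left to right in rank order. Near
  an internal vertex w this uses (P2): an edge x passing over w cannot satisfy \<open>a \<prec> x \<prec> c\<close> for
  \<open>a \<in> I(w)\<close>, \<open>c \<in> O(w)\<close>, since \<open>a \<rightarrow> x\<close> or \<open>x \<rightarrow> c\<close> would contradict the heights. So the
  canonical order of every elementary strip is the restriction of \<open>\<prec>\<close>, and composing the strips
  from the top restricts \<open>\<prec>\<close> to ever larger sets of edges: the planarity conditions show that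
  the non-glued edges of the two pieces interleave with the glued ones exactly as prescribed by
  the composition of orders.
\<close>

section \<open>Sorted lists of a finite strict linear order\<close>

locale finite_strict_linear_order =
  fixes E :: "'e set" and prec :: "('e \<times> 'e) set"
  assumes finite_E: "finite E" and linear: "strict_linear_on E prec"
begin

abbreviation prec_less (infix "\<sqsubset>" 50) where "x \<sqsubset> y \<equiv> (x, y) \<in> prec"

lemma prec_in_E: "x \<sqsubset> y \<Longrightarrow> x \<in> E \<and> y \<in> E"
  using linear unfolding strict_linear_on_def by auto

lemma prec_trans: "x \<sqsubset> y \<Longrightarrow> y \<sqsubset> z \<Longrightarrow> x \<sqsubset> z"
  using linear unfolding strict_linear_on_def by (meson transD)

lemma prec_irrefl: "\<not> x \<sqsubset> x"
  using linear prec_in_E unfolding strict_linear_on_def by blast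

lemma prec_asym: "x \<sqsubset> y \<Longrightarrow> \<not> y \<sqsubset> x"
  using prec_trans prec_irrefl by blast

lemma prec_total: "x \<in> E \<Longrightarrow> y \<in> E \<Longrightarrow> x \<noteq> y \<Longrightarrow> x \<sqsubset> y \<or> y \<sqsubset> x"
  using linear unfolding strict_linear_on_def by blast

definition rank :: "'e \<Rightarrow> nat" where
  "rank e = card {e' \<in> E. e' \<sqsubset> e}"

lemma rank_strict_mono: assumes "x \<sqsubset> y" shows "rank x < rank y"
proof -
  have "{e' \<in> E. e' \<sqsubset> x} \<subset> {e' \<in> E. e' \<sqsubset> y}"
    using assms prec_in_E prec_trans prec_irrefl by blast
  then show ?thesis unfolding rank_def by (intro psubset_card_mono) (auto simp: finite_E)
qed

lemma prec_iff_rank_less: "x \<in> E \<Longrightarrow> y \<in> E \<Longrightarrow> x \<sqsubset> y \<longleftrightarrow> rank x < rank y"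
  using prec_total rank_strict_mono by (metis less_asym less_irrefl)

lemma rank_inj: "x \<in> E \<Longrightarrow> y \<in> E \<Longrightarrow> rank x = rank y \<Longrightarrow> x = y"
  using prec_total rank_strict_mono by (metis less_irrefl)

lemma rank_less_card: assumes "x \<in> E" shows "rank x < card E"
proof -
  have "{e' \<in> E. e' \<sqsubset> x} \<subset> E" using assms prec_irrefl by blast
  then show ?thesis unfolding rank_def by (intro psubset_card_mono) (auto simp: finite_E)
qed

lemma exists_rank_min:
  assumes "A \<subseteq> E" "A \<noteq> {}"
  obtains z where "z \<in> A" "\<And>a. a \<in> A \<Longrightarrow> a \<noteq> z \<Longrightarrow> z \<sqsubset> a"
proof -
  have "finite A" using assms finite_E finite_subset by blast
  then have "Min (rank ` A) \<in> rank ` A" using assms by (intro Min_in) auto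
  then obtain z where z: "z \<in> A" "rank z = Min (rank ` A)" by auto
  have "z \<sqsubset> a" if "a \<in> A" "a \<noteq> z" for a
    using that z \<open>finite A\<close> assms(1) rank_inj prec_iff_rank_less
    by (metis Min_le finite_imageI image_eqI le_neq_implies_less subsetD)
  then show ?thesis using that z by blast
qed

lemma exists_rank_max:
  assumes "A \<subseteq> E" "A \<noteq> {}"
  obtains z where "z \<in> A" "\<And>a. a \<in> A \<Longrightarrow> a \<noteq> z \<Longrightarrow> a \<sqsubset> z"
proof -
  have "finite A" using assms finite_E finite_subset by blast
  then have "Max (rank ` A) \<in> rank ` A" using assms by (intro Max_in) auto
  then obtain z where z: "z \<in> A" "rank z = Max (rank ` A)" by auto
  have "a \<sqsubset> z" if "a \<in> A" "a \<noteq> z" for a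
    using that z \<open>finite A\<close> assms(1) rank_inj prec_iff_rank_less
    by (metis Max_ge finite_imageI image_eqI le_neq_implies_less subsetD)
  then show ?thesis using that z by blast
qed

definition sorted_list :: "'e set \<Rightarrow> 'e list" where
  "sorted_list S = (THE L. distinct L \<and> set L = S \<and> sorted_wrt (\<sqsubset>) L)"

lemma sorted_wrt_prec_unique:
  "distinct L1 \<Longrightarrow> distinct L2 \<Longrightarrow> set L1 = set L2 \<Longrightarrow>
     sorted_wrt (\<sqsubset>) L1 \<Longrightarrow> sorted_wrt (\<sqsubset>) L2 \<Longrightarrow> L1 = L2"
proof (induction L1 arbitrary: L2)
  case (Cons x xs)
  then obtain y ys where L2: "L2 = y # ys" by (cases L2) auto
  have "x = y"
  proof (rule ccontr)
    assume "x \<noteq> y"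
    then have "y \<in> set xs" "x \<in> set ys" using Cons.prems L2 by (auto simp: set_eq_iff)
    then show False using Cons.prems L2 prec_asym by auto
  qed
  moreover have "set xs = set ys" using Cons.prems L2 \<open>x = y\<close> by auto
  ultimately show ?case using Cons L2 by auto
qed simp

lemma sorted_list_exists:
  assumes "S \<subseteq> E" shows "\<exists>L. distinct L \<and> set L = S \<and> sorted_wrt (\<sqsubset>) L"
proof -
  obtain L0 where L0: "set L0 = S" "distinct L0"
    using finite_distinct_list assms finite_E finite_subset by metis
  define L where "L = sort_key rank L0"
  have L: "set L = S" "distinct L" "sorted (map rank L)" using L0 unfolding L_def by auto
  have "sorted_wrt (\<sqsubset>) L"
    unfolding sorted_wrt_iff_nth_less
  proof (intro allI impI)
    fix i k assume "i < k" "k < length L"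
    then have "rank (L ! i) \<le> rank (L ! k)" "L ! i \<noteq> L ! k" "L ! i \<in> E" "L ! k \<in> E"
      using L assms by (auto simp: sorted_iff_nth_mono nth_eq_iff_index_eq)
    then show "L ! i \<sqsubset> L ! k" using rank_inj prec_iff_rank_less by (metis le_neq_implies_less)
  qed
  then show ?thesis using L by blast
qed

lemma sorted_list:
  assumes "S \<subseteq> E"
  shows "distinct (sorted_list S)" "set (sorted_list S) = S" "sorted_wrt (\<sqsubset>) (sorted_list S)"
proof -
  have "\<exists>!L. distinct L \<and> set L = S \<and> sorted_wrt (\<sqsubset>) L"
    using sorted_list_exists[OF assms] sorted_wrt_prec_unique by blast
  then have "distinct (sorted_list S) \<and> set (sorted_list S) = S \<and> sorted_wrt (\<sqsubset>) (sorted_list S)"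
    unfolding sorted_list_def by (rule theI')
  then show "distinct (sorted_list S)" "set (sorted_list S) = S" "sorted_wrt (\<sqsubset>) (sorted_list S)"
    by auto
qed

lemma sorted_list_eq:
  "distinct L \<Longrightarrow> set L \<subseteq> E \<Longrightarrow> sorted_wrt (\<sqsubset>) L \<Longrightarrow> sorted_list (set L) = L"
  using sorted_list[of "set L"] sorted_wrt_prec_unique by auto

lemma sorted_list_empty [simp]: "sorted_list {} = []"
  using sorted_list_eq[of "[]"] by simp

lemma sorted_list_append:
  assumes "S1 \<subseteq> E" "S2 \<subseteq> E" "\<And>a b. a \<in> S1 \<Longrightarrow> b \<in> S2 \<Longrightarrow> a \<sqsubset> b"
  shows "sorted_list (S1 \<union> S2) = sorted_list S1 @ sorted_list S2"
proof -
  note L1 = sorted_list[OF assms(1)] and L2 = sorted_list[OF assms(2)]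
  have "S1 \<inter> S2 = {}" using assms(3) prec_irrefl by blast
  then have "sorted_list (set (sorted_list S1 @ sorted_list S2)) = sorted_list S1 @ sorted_list S2"
    using L1 L2 assms by (intro sorted_list_eq) (auto simp: sorted_wrt_append)
  then show ?thesis using L1 L2 by simp
qed

lemma sorted_list_split:
  assumes "S \<subseteq> E" "x \<in> S"
  shows "sorted_list S = sorted_list {s \<in> S. s \<sqsubset> x} @ x # sorted_list {s \<in> S. x \<sqsubset> s}"
proof -
  have S: "S = {s \<in> S. s \<sqsubset> x} \<union> ({x} \<union> {s \<in> S. x \<sqsubset> s})"
    using assms prec_total by blast
  have "sorted_list {x} = [x]" using sorted_list_eq[of "[x]"] assms by auto
  moreover have "sorted_list S = sorted_list {s \<in> S. s \<sqsubset> x} @ sorted_list ({x} \<union> {s \<in> S. x \<sqsubset> s})"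
    using assms by (subst S, intro sorted_list_append) (auto intro: prec_trans)
  moreover have "sorted_list ({x} \<union> {s \<in> S. x \<sqsubset> s}) = sorted_list {x} @ sorted_list {s \<in> S. x \<sqsubset> s}"
    using assms by (intro sorted_list_append) auto
  ultimately show ?thesis by simp
qed

lemma list_order_sorted_list: "list_order (sorted_list E) = prec"
proof -
  note L = sorted_list[OF order_refl]
  have "(a, b) \<in> list_order (sorted_list E)" if "a \<sqsubset> b" for a b
  proof -
    obtain i k where ik: "i < length (sorted_list E)" "k < length (sorted_list E)"
      "sorted_list E ! i = a" "sorted_list E ! k = b"
      using \<open>a \<sqsubset> b\<close> prec_in_E L(2) by (metis in_set_conv_nth)
    have "\<not> k \<le> i"
      using L(3) ik \<open>a \<sqsubset> b\<close> prec_asym prec_irrefl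
      unfolding sorted_wrt_iff_nth_less by (metis le_neq_implies_less)
    then show ?thesis unfolding list_order_def using ik by force
  qed
  moreover have "list_order (sorted_list E) \<subseteq> prec"
    using L(3) unfolding list_order_def sorted_wrt_iff_nth_less by auto
  ultimately show ?thesis by auto
qed

end

section \<open>Composition of sorted lists\<close>

lemma cut_segs_append_disjoint:
  "set p \<inter> Z = {} \<Longrightarrow> cut_segs Z (p @ L) = (p @ fst (cut_segs Z L), snd (cut_segs Z L))"
  by (induction p) (auto simp: Let_def split: prod.splits)

lemma cut_segs_Cons_mem:
  "x \<in> Z \<Longrightarrow> cut_segs Z (x # L) = ([], (x, fst (cut_segs Z L)) # snd (cut_segs Z L))"
  by (auto simp: Let_def split: prod.splits)

lemma fst_cut_segs_Nil: "L = [] \<or> hd L \<in> Z \<Longrightarrow> fst (cut_segs Z L) = []"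
  by (cases L) (auto simp: Let_def split: prod.splits)

lemma compose_order_Cons:
  assumes "set q \<inter> Z = {}" "set p \<inter> Z = {}" "x \<in> Z" "L = [] \<or> hd L \<in> Z"
  shows "compose_order Z (q @ x # C) (x # p @ L) = q @ x # p @ compose_order Z C L"
proof -
  obtain s rc where C: "cut_segs Z C = (s, rc)" by force
  obtain rl where L: "cut_segs Z L = ([], rl)"
    using fst_cut_segs_Nil[OF assms(4)] by (metis prod.collapse)
  have "cut_segs Z (q @ x # C) = (q, (x, s) # rc)"
    using cut_segs_append_disjoint[OF assms(1)] cut_segs_Cons_mem[OF assms(3)] C assms(3) by simp
  moreover have "cut_segs Z (x # p @ L) = ([], (x, p) # rl)"
    using cut_segs_Cons_mem[OF assms(3)] cut_segs_append_disjoint[OF assms(2)] L assms(3) by simp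
  ultimately show ?thesis
    unfolding compose_order_def using C L by (cases rc) simp_all
qed

context finite_strict_linear_order
begin

text \<open>A and B are the edge sets of an upper and a lower graph glued along Z (the outputs of
  the upper = the inputs of the lower graph).\<close>
definition composable :: "'e set \<Rightarrow> 'e set \<Rightarrow> 'e set \<Rightarrow> bool" where
  "composable Z A B \<longleftrightarrow> A \<subseteq> E \<and> B \<subseteq> E \<and> A \<inter> Z = A \<inter> B \<and> B \<inter> Z = A \<inter> B \<and>
     (\<forall>a\<in>A - B. \<exists>u\<in>A \<inter> B. a \<sqsubset> u) \<and>
     (\<forall>b\<in>B - A. \<exists>u\<in>A \<inter> B. u \<sqsubset> b) \<and>
     (\<forall>q\<in>A - B. \<forall>p\<in>B - A. q \<sqsubset> p \<longrightarrow> (\<exists>u\<in>A \<inter> B. q \<sqsubset> u \<and> u \<sqsubset> p))"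

lemma composableD:
  assumes "composable Z A B"
  shows "A \<subseteq> E" "B \<subseteq> E" "A \<inter> Z = A \<inter> B" "B \<inter> Z = A \<inter> B"
    "a \<in> A - B \<Longrightarrow> \<exists>u\<in>A \<inter> B. a \<sqsubset> u"
    "b \<in> B - A \<Longrightarrow> \<exists>u\<in>A \<inter> B. u \<sqsubset> b"
    "q \<in> A - B \<Longrightarrow> p \<in> B - A \<Longrightarrow> q \<sqsubset> p \<Longrightarrow> \<exists>u\<in>A \<inter> B. q \<sqsubset> u \<and> u \<sqsubset> p"
  using assms unfolding composable_def by blast+

context
  fixes Z A B x
  assumes composable: "composable Z A B"
    and x_glued: "x \<in> A \<inter> B" and x_min: "\<And>u. u \<in> A \<inter> B \<Longrightarrow> \<not> u \<sqsubset> x"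
begin

text \<open>The part of B from the second glued edge on.\<close>
abbreviation tail :: "'e set" where
  "tail \<equiv> {b \<in> B. \<exists>u\<in>A \<inter> B - {x}. u \<sqsubset> b \<or> u = b}"

lemma glued_above_min: "u \<in> A \<inter> B - {x} \<Longrightarrow> x \<sqsubset> u"
  using x_glued x_min prec_total[of x u] composableD(1)[OF composable] by auto

lemma tail_above_min:
  assumes "b \<in> tail" shows "x \<sqsubset> b"
proof -
  obtain u where "u \<in> A \<inter> B - {x}" "u \<sqsubset> b \<or> u = b" using assms by blast
  then show ?thesis using glued_above_min prec_trans[of x u b] by blast
qed

lemma B_not_below_min: "b \<in> B \<Longrightarrow> \<not> b \<sqsubset> x"
proof
  assume "b \<in> B" "b \<sqsubset> x"
  moreover obtain u where "u \<in> A \<inter> B" "u \<sqsubset> b \<or> u = b"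
    using composableD(6)[OF composable] \<open>b \<in> B\<close> by blast
  ultimately show False using x_min prec_trans[of _ b x] by blast
qed

lemma tail_upward_closed:
  assumes "p \<in> B" "s \<in> tail" "s \<sqsubset> p" shows "p \<in> tail"
proof -
  obtain u where u: "u \<in> A \<inter> B - {x}" "u \<sqsubset> s \<or> u = s" using assms(2) by blast
  then have "u \<sqsubset> p" using assms(3) prec_trans[of u s p] by blast
  then show ?thesis using assms(1) u(1) by blast
qed

lemma above_min_Int_tail: "{a \<in> A. x \<sqsubset> a} \<inter> tail = A \<inter> B - {x}"
proof
  show "{a \<in> A. x \<sqsubset> a} \<inter> tail \<subseteq> A \<inter> B - {x}" using prec_irrefl by blast
  show "A \<inter> B - {x} \<subseteq> {a \<in> A. x \<sqsubset> a} \<inter> tail" using glued_above_min by blast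
qed

lemma above_min_tail_glued:
  "{a \<in> A. x \<sqsubset> a} \<inter> Z = {a \<in> A. x \<sqsubset> a} \<inter> tail" "tail \<inter> Z = {a \<in> A. x \<sqsubset> a} \<inter> tail"
proof -
  note C = composableD[OF composable]
  have "a \<in> A \<inter> B - {x}" if "a \<in> A" "x \<sqsubset> a" "a \<in> Z" for a
    using that C(3) prec_irrefl by auto
  then show "{a \<in> A. x \<sqsubset> a} \<inter> Z = {a \<in> A. x \<sqsubset> a} \<inter> tail"
    using above_min_Int_tail C(3) by blast
  have "b \<in> A \<inter> B - {x}" if "b \<in> tail" "b \<in> Z" for b
    using that C(4) tail_above_min[of b] prec_irrefl by auto
  then show "tail \<inter> Z = {a \<in> A. x \<sqsubset> a} \<inter> tail"
    using above_min_Int_tail C(4) by blast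
qed

lemma above_min_tail_diff:
  "{a \<in> A. x \<sqsubset> a} - tail \<subseteq> A - B" "tail - {a \<in> A. x \<sqsubset> a} \<subseteq> B - A"
proof
  fix a assume a: "a \<in> {a \<in> A. x \<sqsubset> a} - tail"
  then have "a \<notin> A \<inter> B - {x}" using above_min_Int_tail by blast
  then show "a \<in> A - B" using a prec_irrefl by auto
next
  show "tail - {a \<in> A. x \<sqsubset> a} \<subseteq> B - A" using tail_above_min by blast
qed

lemma composable_above_min: "composable Z {a \<in> A. x \<sqsubset> a} tail"
proof -
  note C = composableD[OF composable]
  define A2 where "A2 = {a \<in> A. x \<sqsubset> a}"
  note common = above_min_Int_tail[folded A2_def]
  note diff = above_min_tail_diff[folded A2_def]
  have R1: "\<exists>u\<in>A2 \<inter> tail. a \<sqsubset> u" if a: "a \<in> A2 - tail" for a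
  proof -
    obtain u where u: "u \<in> A \<inter> B" "a \<sqsubset> u" using C(5) diff(1) a by blast
    moreover have "x \<sqsubset> u" using a u(2) prec_trans[of x a u] unfolding A2_def by blast
    ultimately have "u \<in> A \<inter> B - {x}" using prec_irrefl by auto
    then have "u \<in> A2 \<inter> tail" using common by simp
    then show ?thesis using u(2) by blast
  qed
  have R2: "\<exists>u\<in>A2 \<inter> tail. u \<sqsubset> b" if b: "b \<in> tail - A2" for b
  proof -
    obtain u where u: "u \<in> A \<inter> B - {x}" "u \<sqsubset> b \<or> u = b" using b by blast
    then have "u \<in> A2 \<inter> tail" using common by simp
    moreover have "u \<noteq> b" using calculation b by blast
    ultimately show ?thesis using u(2) by auto
  qed
  have R3: "\<exists>u\<in>A2 \<inter> tail. q \<sqsubset> u \<and> u \<sqsubset> p"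
    if qp: "q \<in> A2 - tail" "p \<in> tail - A2" "q \<sqsubset> p" for q p
  proof -
    have "q \<in> A - B" "p \<in> B - A" using diff qp(1,2) by auto
    then obtain u where u: "u \<in> A \<inter> B" "q \<sqsubset> u" "u \<sqsubset> p" using C(7) qp(3) by blast
    moreover have "x \<sqsubset> u" using qp u(2) prec_trans[of x q u] unfolding A2_def by blast
    ultimately have "u \<in> A \<inter> B - {x}" using prec_irrefl by auto
    then have "u \<in> A2 \<inter> tail" using common by simp
    then show ?thesis using u(2,3) by blast
  qed
  have "A2 \<subseteq> E" "tail \<subseteq> E" using C(1,2) unfolding A2_def by auto
  then show ?thesis
    unfolding composable_def A2_def[symmetric]
    using above_min_tail_glued[folded A2_def] R1 R2 R3 by (intro conjI ballI impI) auto
qed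

lemma first_gap_before_tail:
  assumes p: "p \<in> {b \<in> B. x \<sqsubset> b} - tail" and s: "s \<in> {a \<in> A. x \<sqsubset> a} \<union> tail"
  shows "p \<sqsubset> s"
proof -
  note C = composableD[OF composable]
  have pBA: "p \<in> B - A"
  proof -
    have "p \<notin> A \<inter> B - {x}" using p by blast
    then show ?thesis using p prec_irrefl by auto
  qed
  have "\<not> s \<sqsubset> p"
  proof
    assume sp: "s \<sqsubset> p"
    have "s \<in> tail"
    proof (cases "s \<in> B")
      case False
      then have sA: "s \<in> A" "x \<sqsubset> s" using s by auto
      then obtain u where u: "u \<in> A \<inter> B" "s \<sqsubset> u" "u \<sqsubset> p" using C(7)[of s p] False pBA sp by blast
      have "x \<sqsubset> u" using sA(2) u(2) prec_trans[of x s u] by blast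
      then have "u \<in> A \<inter> B - {x}" using u(1) prec_irrefl by auto
      then have "u \<in> tail" by blast
      then have "p \<in> tail" using tail_upward_closed[OF _ _ u(3)] pBA by blast
      then show ?thesis using p by blast
    next
      case True
      then have "s \<in> A \<inter> B - {x} \<or> s \<in> tail" using s prec_irrefl by auto
      then show ?thesis by blast
    qed
    then have "p \<in> tail" using tail_upward_closed[of p s] sp p by blast
    then show False using p by blast
  qed
  moreover have "p \<noteq> s" using pBA p s by blast
  moreover have "p \<in> E" "s \<in> E" using p s C(1,2) by auto
  ultimately show ?thesis using prec_total[of p s] by blast
qed

lemma sorted_list_B_at_min:
  "sorted_list B = x # sorted_list ({b \<in> B. x \<sqsubset> b} - tail) @ sorted_list tail"
proof -
  note C = composableD[OF composable]
  have below: "{b \<in> B. b \<sqsubset> x} = {}" using B_not_below_min by blast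
  have above: "{b \<in> B. x \<sqsubset> b} = ({b \<in> B. x \<sqsubset> b} - tail) \<union> tail" using tail_above_min by auto
  have "sorted_list (({b \<in> B. x \<sqsubset> b} - tail) \<union> tail) =
      sorted_list ({b \<in> B. x \<sqsubset> b} - tail) @ sorted_list tail"
  proof (rule sorted_list_append)
    show "{b \<in> B. x \<sqsubset> b} - tail \<subseteq> E" "tail \<subseteq> E" using C(2) by auto
    show "p \<sqsubset> s" if "p \<in> {b \<in> B. x \<sqsubset> b} - tail" "s \<in> tail" for p s
      using first_gap_before_tail that by blast
  qed
  then show ?thesis using sorted_list_split[OF C(2) IntD2[OF x_glued]]
    unfolding below above[symmetric] by simp
qed

lemma sorted_list_union_at_min:
  "sorted_list (A \<union> B) = sorted_list {a \<in> A. a \<sqsubset> x} @ x #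
     sorted_list ({b \<in> B. x \<sqsubset> b} - tail) @ sorted_list ({a \<in> A. x \<sqsubset> a} \<union> tail)"
proof -
  note C = composableD[OF composable]
  have below: "{s \<in> A \<union> B. s \<sqsubset> x} = {a \<in> A. a \<sqsubset> x}" using B_not_below_min by blast
  have above: "{s \<in> A \<union> B. x \<sqsubset> s} = ({b \<in> B. x \<sqsubset> b} - tail) \<union> ({a \<in> A. x \<sqsubset> a} \<union> tail)"
    using tail_above_min by blast
  have "sorted_list (({b \<in> B. x \<sqsubset> b} - tail) \<union> ({a \<in> A. x \<sqsubset> a} \<union> tail)) =
      sorted_list ({b \<in> B. x \<sqsubset> b} - tail) @ sorted_list ({a \<in> A. x \<sqsubset> a} \<union> tail)"
  proof (rule sorted_list_append)
    show "{b \<in> B. x \<sqsubset> b} - tail \<subseteq> E" "{a \<in> A. x \<sqsubset> a} \<union> tail \<subseteq> E"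
      using C(1,2) by auto
    show "p \<sqsubset> s" if "p \<in> {b \<in> B. x \<sqsubset> b} - tail" "s \<in> {a \<in> A. x \<sqsubset> a} \<union> tail" for p s
      using first_gap_before_tail that by blast
  qed
  moreover have "A \<union> B \<subseteq> E" "x \<in> A \<union> B" using C(1,2) x_glued by auto
  ultimately show ?thesis using sorted_list_split[of "A \<union> B" x] unfolding below above by simp
qed

lemma segments_avoid_glued:
  "set (sorted_list {a \<in> A. a \<sqsubset> x}) \<inter> Z = {}"
  "set (sorted_list ({b \<in> B. x \<sqsubset> b} - tail)) \<inter> Z = {}"
  "sorted_list tail = [] \<or> hd (sorted_list tail) \<in> Z"
proof -
  note C = composableD[OF composable]
  have sub: "{a \<in> A. a \<sqsubset> x} \<subseteq> E" "{b \<in> B. x \<sqsubset> b} - tail \<subseteq> E" "tail \<subseteq> E"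
    using C(1,2) by auto
  have "a \<notin> Z" if a: "a \<in> A" "a \<sqsubset> x" for a
  proof
    assume "a \<in> Z"
    then have "a \<in> A \<inter> B" using a(1) C(3) by blast
    then show False using x_min a(2) by blast
  qed
  then show "set (sorted_list {a \<in> A. a \<sqsubset> x}) \<inter> Z = {}"
    using sorted_list(2)[OF sub(1)] by blast
  have "p \<notin> Z" if p: "p \<in> {b \<in> B. x \<sqsubset> b} - tail" for p
  proof
    assume "p \<in> Z"
    then have "p \<in> A \<inter> B" "p \<noteq> x" using p C(4) prec_irrefl by auto
    then have "p \<in> A \<inter> B - {x}" by blast
    then show False using p by blast
  qed
  then show "set (sorted_list ({b \<in> B. x \<sqsubset> b} - tail)) \<inter> Z = {}"
    using sorted_list(2)[OF sub(2)] by blast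
  show "sorted_list tail = [] \<or> hd (sorted_list tail) \<in> Z"
  proof (cases "sorted_list tail")
    case (Cons h t)
    then have "h \<in> tail" using sorted_list(2)[OF sub(3)] by auto
    then obtain u where u: "u \<in> A \<inter> B - {x}" "u \<sqsubset> h \<or> u = h" by blast
    then have "u \<in> set (h # t)" using sorted_list(2)[OF sub(3)] Cons by auto
    then have "u = h" using sorted_list(3)[OF sub(3)] Cons u(2) prec_asym by auto
    then show ?thesis using u C(3) Cons by auto
  qed simp
qed

end

lemma compose_order_sorted_list:
  assumes "composable Z A B"
  shows "compose_order Z (sorted_list A) (sorted_list B) = sorted_list (A \<union> B)"
  using assms
proof (induction "card (A \<inter> B)" arbitrary: A B rule: less_induct)
  case less
  note C = composableD[OF less.prems]
  show ?case
  proof (cases "A \<inter> B = {}")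
    case True
    then have "A = {}" "B = {}" using C(5,6) by blast+
    then show ?thesis unfolding compose_order_def by simp
  next
    case False
    then obtain x where x: "x \<in> A \<inter> B" "\<And>u. u \<in> A \<inter> B \<Longrightarrow> u \<noteq> x \<Longrightarrow> x \<sqsubset> u"
      using exists_rank_min[of "A \<inter> B"] C(1) by blast
    then have x_min: "\<not> u \<sqsubset> x" if "u \<in> A \<inter> B" for u
      using that prec_asym prec_irrefl by blast
    define A2 where "A2 = {a \<in> A. x \<sqsubset> a}"
    define B2 where "B2 = {b \<in> B. \<exists>u\<in>A \<inter> B - {x}. u \<sqsubset> b \<or> u = b}"
    have "compose_order Z (sorted_list A2) (sorted_list B2) = sorted_list (A2 \<union> B2)"
    proof (rule less.hyps)
      have "finite (A \<inter> B)" using C(1) finite_E finite_subset by blast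
      then show "card (A2 \<inter> B2) < card (A \<inter> B)"
        using card_Diff1_less[OF _ x(1)] above_min_Int_tail[OF less.prems x(1) x_min]
        unfolding A2_def B2_def by simp
      show "composable Z A2 B2"
        unfolding A2_def B2_def by (rule composable_above_min[OF less.prems x(1) x_min])
    qed
    moreover have "sorted_list A = sorted_list {a \<in> A. a \<sqsubset> x} @ x # sorted_list A2"
      unfolding A2_def using sorted_list_split C(1) x(1) by blast
    moreover have "x \<in> Z" using C(3) x(1) by blast
    ultimately show ?thesis
      using sorted_list_B_at_min[OF less.prems x(1) x_min]
        sorted_list_union_at_min[OF less.prems x(1) x_min]
        segments_avoid_glued[OF less.prems x(1) x_min]
      unfolding A2_def B2_def by (simp add: compose_order_Cons)
  qed
qed

end

section \<open>Planar orders on progressive graphs\<close>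

locale planar_progressive =
  fixes V :: "'v set" and E :: "'e set" and src tgt :: "'e \<Rightarrow> 'v"
    and prec :: "('e \<times> 'e) set"
  assumes progressive: "progressive_graph V E src tgt"
    and planar: "planar_order E src tgt prec"

sublocale planar_progressive \<subseteq> finite_strict_linear_order E prec
  using progressive planar unfolding progressive_graph_def planar_order_def
  by unfold_locales auto

context planar_progressive
begin

abbreviation "In v \<equiv> in_edges E tgt v"
abbreviation "Out v \<equiv> out_edges E src v"
abbreviation "reach \<equiv> edge_reach E src tgt"
abbreviation "internal \<equiv> internal_vertex V E src tgt"

lemma src_in_V: "e \<in> E \<Longrightarrow> src e \<in> V"
  and tgt_in_V: "e \<in> E \<Longrightarrow> tgt e \<in> V"
  using progressive unfolding progressive_graph_def by auto

lemma src_ne_tgt: "e \<in> E \<Longrightarrow> src e \<noteq> tgt e"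
  using progressive unfolding progressive_graph_def acyclic_def by fastforce

lemma finite_In: "finite (In v)" and finite_Out: "finite (Out v)"
  using finite_E unfolding in_edges_def out_edges_def by auto

lemma In_iff: "e \<in> In v \<longleftrightarrow> e \<in> E \<and> tgt e = v"
  and Out_iff: "e \<in> Out v \<longleftrightarrow> e \<in> E \<and> src e = v"
  unfolding in_edges_def out_edges_def by auto

lemma source_Out_singleton: assumes "v \<in> V" "In v = {}" shows "\<exists>e. Out v = {e}"
proof -
  have "is_source V E tgt v" using assms unfolding is_source_def by auto
  then have "degree E src tgt v = 1" using progressive unfolding progressive_graph_def by auto
  then have "card (Out v) = 1" using assms unfolding degree_def by simp
  then show ?thesis by (simp add: card_1_singleton_iff)
qed

lemma sink_In_singleton: assumes "v \<in> V" "Out v = {}" shows "\<exists>e. In v = {e}"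
proof -
  have "is_sink V E src v" using assms unfolding is_sink_def by auto
  then have "degree E src tgt v = 1" using progressive unfolding progressive_graph_def by auto
  then have "card (In v) = 1" using assms unfolding degree_def by simp
  then show ?thesis by (simp add: card_1_singleton_iff)
qed

lemma internal_iff: "internal v \<longleftrightarrow> v \<in> V \<and> In v \<noteq> {} \<and> Out v \<noteq> {}"
proof
  assume "internal v"
  then have v: "v \<in> V" and d: "degree E src tgt v \<noteq> 1" unfolding internal_vertex_def by auto
  show "v \<in> V \<and> In v \<noteq> {} \<and> Out v \<noteq> {}"
  proof (intro conjI v notI)
    assume "In v = {}"
    then have "is_source V E tgt v" using v unfolding is_source_def by auto
    then show False using d progressive unfolding progressive_graph_def by auto
  next
    assume "Out v = {}"
    then have "is_sink V E src v" using v unfolding is_sink_def by auto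
    then show False using d progressive unfolding progressive_graph_def by auto
  qed
next
  assume "v \<in> V \<and> In v \<noteq> {} \<and> Out v \<noteq> {}"
  then have "card (In v) \<ge> 1" "card (Out v) \<ge> 1" using finite_In finite_Out
    by (auto simp: Suc_le_eq card_gt_0_iff)
  then show "internal v" using \<open>v \<in> V \<and> _\<close> unfolding internal_vertex_def degree_def by auto
qed

lemma src_internal_or_source: assumes "e \<in> E"
  shows "internal (src e) \<or> Out (src e) = {e} \<and> In (src e) = {}"
proof -
  have v: "src e \<in> V" "e \<in> Out (src e)" using assms src_in_V Out_iff by auto
  show ?thesis
  proof (cases "In (src e) = {}")
    case True
    then obtain e' where "Out (src e) = {e'}" using source_Out_singleton v by blast
    then show ?thesis using v True by auto
  next
    case False
    then have "internal (src e)" using v internal_iff by blast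
    then show ?thesis by blast
  qed
qed

lemma tgt_internal_or_sink: assumes "e \<in> E"
  shows "internal (tgt e) \<or> In (tgt e) = {e} \<and> Out (tgt e) = {}"
proof -
  have v: "tgt e \<in> V" "e \<in> In (tgt e)" using assms tgt_in_V In_iff by auto
  show ?thesis
  proof (cases "Out (tgt e) = {}")
    case True
    then obtain e' where "In (tgt e) = {e'}" using sink_In_singleton v by blast
    then show ?thesis using v True by auto
  next
    case False
    then have "internal (tgt e)" using v internal_iff by blast
    then show ?thesis by blast
  qed
qed

lemma reach_imp_prec: "reach x y \<Longrightarrow> x \<sqsubset> y"
  using planar unfolding planar_order_def by simp

lemma prec_between_reach: "x \<sqsubset> y \<Longrightarrow> y \<sqsubset> z \<Longrightarrow> reach x z \<Longrightarrow> reach x y \<or> reach y z"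
  using planar unfolding planar_order_def
  by (elim conjE allE[of _ x] allE[of _ y] allE[of _ z]) simp

lemma reach_consecutive: assumes "x \<in> E" "y \<in> E" "tgt x = src y" shows "reach x y"
proof -
  have "x \<noteq> y" using assms src_ne_tgt[of x] by auto
  then show ?thesis unfolding edge_reach_def using assms by (auto intro: r_into_trancl)
qed

end

section \<open>An upward embedding of a planar order\<close>

lemma convex_comb_between:
  fixes a b l lo hi :: real
  assumes "0 \<le> l" "l \<le> 1" "lo \<le> a" "a \<le> hi" "lo \<le> b" "b \<le> hi"
  shows "lo \<le> a + (b - a) * l" "a + (b - a) * l \<le> hi"
proof -
  have eq: "a + (b - a) * l = (1 - l) * a + l * b" by algebra
  have "(1 - l) * lo \<le> (1 - l) * a" "l * lo \<le> l * b" "(1 - l) * a \<le> (1 - l) * hi" "l * b \<le> l * hi"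
    using assms by (auto intro: mult_left_mono)
  then show "lo \<le> a + (b - a) * l" "a + (b - a) * l \<le> hi"
    unfolding eq by (simp_all add: algebra_simps)
qed

lemma convex_comb_strict_mono:
  fixes a b p l :: real
  assumes "a < b" "l < 1"
  shows "a + (p - a) * l < b + (p - b) * l"
proof -
  have "b + (p - b) * l - (a + (p - a) * l) = (b - a) * (1 - l)" by algebra
  then show ?thesis using assms by (metis diff_gt_0_iff_gt zero_less_mult_iff)
qed

context planar_progressive
begin

definition level :: "'v \<Rightarrow> nat" where
  "level v = (if In v = {} then card E + 1 else if Out v = {} then 0
     else card E - Min (rank ` Out v))"

definition column :: "'v \<Rightarrow> nat" where
  "column v = (if Out v \<noteq> {} then Min (rank ` Out v) else Min (rank ` In v))"

lemma source_vertex: assumes "v \<in> V" "In v = {}"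
  obtains e where "Out v = {e}" "e \<in> E" "src e = v" "level v = card E + 1" "column v = rank e"
proof -
  obtain e where e: "Out v = {e}" using source_Out_singleton assms by blast
  then have "e \<in> E" "src e = v" using Out_iff by auto
  then show ?thesis using that e assms unfolding level_def column_def by auto
qed

lemma sink_vertex: assumes "v \<in> V" "Out v = {}"
  obtains e where "In v = {e}" "e \<in> E" "tgt e = v" "level v = 0" "column v = rank e"
proof -
  obtain e where e: "In v = {e}" using sink_In_singleton assms by blast
  then have "e \<in> E" "tgt e = v" using In_iff by auto
  then show ?thesis using that e assms unfolding level_def column_def by auto
qed

lemma non_internal_src: assumes "e \<in> E" "\<not> internal (src e)"
  shows "level (src e) = card E + 1" "column (src e) = rank e"
  using src_internal_or_source[OF assms(1)] assms(2) unfolding level_def column_def by auto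

lemma non_internal_tgt: assumes "e \<in> E" "\<not> internal (tgt e)"
  shows "level (tgt e) = 0" "column (tgt e) = rank e"
  using tgt_internal_or_sink[OF assms(1)] assms(2) unfolding level_def column_def by auto

lemma internal_level_column: assumes "internal v"
  obtains c where "c \<in> Out v" "column v = rank c" "level v = card E - rank c"
    "\<And>c'. c' \<in> Out v \<Longrightarrow> rank c \<le> rank c'"
proof -
  have ne: "In v \<noteq> {}" "Out v \<noteq> {}" using assms internal_iff by auto
  have "Min (rank ` Out v) \<in> rank ` Out v" using ne finite_Out by (intro Min_in) auto
  then obtain c where c: "c \<in> Out v" "Min (rank ` Out v) = rank c" by auto
  have "\<And>c'. c' \<in> Out v \<Longrightarrow> rank c \<le> rank c'" using c finite_Out
    by (metis Min_le finite_imageI imageI)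
  then show ?thesis using that c ne unfolding level_def column_def by auto
qed

lemma internal_level_bounds: assumes "internal v" shows "1 \<le> level v" "level v \<le> card E"
proof -
  obtain c where c: "c \<in> Out v" "level v = card E - rank c" using internal_level_column assms
    by metis
  have "rank c < card E" using c Out_iff rank_less_card by auto
  then show "1 \<le> level v" "level v \<le> card E" using c by auto
qed

lemma level_inj_internal: assumes "internal v" "internal w" "level v = level w" shows "v = w"
proof -
  obtain c where c: "c \<in> Out v" "level v = card E - rank c" using internal_level_column assms(1)
    by metis
  obtain d where d: "d \<in> Out w" "level w = card E - rank d" using internal_level_column assms(2)
    by metis
  have "rank c < card E" "rank d < card E" using c d Out_iff rank_less_card by auto
  then have "rank c = rank d" using c d assms(3) by auto
  then have "c = d" using rank_inj c d Out_iff by auto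
  then show ?thesis using c d Out_iff by auto
qed

lemma level_tgt_less_src: assumes "e \<in> E" shows "level (tgt e) < level (src e)"
proof (cases "internal (src e)")
  case False
  then have "level (src e) = card E + 1" using non_internal_src assms by auto
  moreover have "level (tgt e) \<le> card E"
    using internal_level_bounds non_internal_tgt assms by (cases "internal (tgt e)") auto
  ultimately show ?thesis by auto
next
  case True
  obtain c where c: "c \<in> Out (src e)" "level (src e) = card E - rank c" "rank c \<le> rank e"
    using internal_level_column[OF True] assms Out_iff by metis
  have ce: "rank e < card E" using rank_less_card assms by auto
  show ?thesis
  proof (cases "internal (tgt e)")
    case False
    then show ?thesis using non_internal_tgt assms c ce by auto
  next
    case True
    obtain d where d: "d \<in> Out (tgt e)" "level (tgt e) = card E - rank d"
      using internal_level_column[OF True] by metis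
    have "d \<in> E" "src d = tgt e" using d Out_iff by auto
    moreover have "e \<noteq> d" using src_ne_tgt assms \<open>src d = tgt e\<close> by metis
    ultimately have "reach e d" using reach_consecutive assms by auto
    then have "rank e < rank d" using reach_imp_prec rank_strict_mono by blast
    moreover have "rank d < card E" using rank_less_card \<open>d \<in> E\<close> by auto
    ultimately show ?thesis using c d ce by auto
  qed
qed

lemma level_tgt_plus_one_le_src: "e \<in> E \<Longrightarrow> real (level (tgt e)) + 1 \<le> real (level (src e))"
  using level_tgt_less_src by (metis Suc_leI of_nat_Suc of_nat_le_iff add.commute)

lemma level_le: "level v \<le> card E + 1" unfolding level_def by auto

lemma column_less_card: assumes "v \<in> V" shows "column v < card E"
proof (cases "internal v")
  case True
  then obtain c where "c \<in> Out v" "column v = rank c" using internal_level_column by metis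
  then show ?thesis using rank_less_card Out_iff by auto
next
  case False
  then have "In v = {} \<or> Out v = {}" using internal_iff assms by auto
  then show ?thesis
  proof
    assume "In v = {}" then show ?thesis using source_vertex[OF assms] rank_less_card by metis
  next
    assume "Out v = {}" then show ?thesis using sink_vertex[OF assms] rank_less_card by metis
  qed
qed

lemma level_separated:
  assumes "internal w" "u \<in> V" "u \<noteq> w"
  shows "1 \<le> \<bar>real (level u) - real (level w)\<bar>"
proof (cases "internal u")
  case True
  then have "level u \<noteq> level w" using level_inj_internal assms by metis
  then show ?thesis by linarith
next
  case False
  then have "level u = card E + 1 \<or> level u = 0" using assms(2) internal_iff unfolding level_def
    by auto
  then show ?thesis using internal_level_bounds[OF assms(1)] by auto
qed

lemma reach_level_trancl:
  assumes "(f, g) \<in> {(a, b). a \<in> E \<and> b \<in> E \<and> tgt a = src b}\<^sup>+"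
  shows "g \<in> E \<and> level (src g) \<le> level (tgt f)"
  using assms
proof (induction rule: trancl_induct)
  case (base y) then show ?case by auto
next
  case (step y z)
  then show ?case using level_tgt_less_src[of y] by auto
qed

lemma reach_level: "reach f g \<Longrightarrow> level (src g) \<le> level (tgt f)"
  unfolding edge_reach_def using reach_level_trancl by blast

lemma reach_last_step:
  assumes "reach q p"
  shows "tgt q = src p \<or> (\<exists>x. x \<in> E \<and> tgt x = src p \<and> reach q x)"
proof -
  have "(q, p) \<in> {(a, b). a \<in> E \<and> b \<in> E \<and> tgt a = src b}\<^sup>+" using assms unfolding edge_reach_def
    by auto
  then show ?thesis
  proof (cases rule: tranclE)
    case base then show ?thesis by auto
  next
    case (step y)
    then show ?thesis
    proof (cases "q = y")
      case True then show ?thesis using step by auto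
    next
      case False then show ?thesis using step unfolding edge_reach_def by auto
    qed
  qed
qed

text \<open>This is where (P2) enters: an edge passing strictly over w is not ordered between an
  incoming and an outgoing edge of w.\<close>
lemma passing_edge_side_in_out:
  assumes "a \<in> In w" "c \<in> Out w" "x \<in> E" "level (tgt x) < level w" "level w < level (src x)"
  shows "rank a < rank x \<longleftrightarrow> rank c < rank x"
proof -
  have a: "a \<in> E" "tgt a = w" and c: "c \<in> E" "src c = w" using assms In_iff Out_iff by auto
  have "a \<noteq> c" using src_ne_tgt a c by metis
  then have "reach a c" using reach_consecutive a c by auto
  then have ac: "rank a < rank c" using reach_imp_prec rank_strict_mono by blast
  have "x \<noteq> a" "x \<noteq> c" using assms a c by auto
  then have "rank x \<noteq> rank a" "rank x \<noteq> rank c" using rank_inj a c assms(3) by metis+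
  have "\<not> (rank a < rank x \<and> rank x < rank c)"
  proof
    assume "rank a < rank x \<and> rank x < rank c"
    then have "a \<sqsubset> x" "x \<sqsubset> c" using prec_iff_rank_less a c assms(3) by auto
    then have "reach a x \<or> reach x c" using prec_between_reach \<open>reach a c\<close> by blast
    then show False
    proof
      assume "reach a x" then have "level (src x) \<le> level (tgt a)" by (rule reach_level)
      then show False using a assms by auto
    next
      assume "reach x c" then have "level (src c) \<le> level (tgt x)" by (rule reach_level)
      then show False using c assms by auto
    qed
  qed
  then show ?thesis using ac \<open>rank x \<noteq> rank c\<close> by auto
qed

lemma passing_edge_side:
  assumes "internal w" "x \<in> E" "level (tgt x) < level w" "level w < level (src x)"
    "f \<in> E" "src f = w \<or> tgt f = w" "g \<in> E" "src g = w \<or> tgt g = w"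
  shows "rank f < rank x \<longleftrightarrow> rank g < rank x"
proof -
  obtain a0 c0 where a0: "a0 \<in> In w" and c0: "c0 \<in> Out w" using assms(1) internal_iff by blast
  have key: "rank h < rank x \<longleftrightarrow> rank a0 < rank x" if "h \<in> E" "src h = w \<or> tgt h = w" for h
  proof (cases "src h = w")
    case True
    then have "h \<in> Out w" using that Out_iff by auto
    then show ?thesis using passing_edge_side_in_out[OF a0 _ assms(2-4)] by auto
  next
    case False
    then have "h \<in> In w" using that In_iff by auto
    then show ?thesis
      using passing_edge_side_in_out[OF _ c0 assms(2-4)]
        passing_edge_side_in_out[OF a0 c0 assms(2-4)] by auto
  qed
  show ?thesis using key[OF assms(5,6)] key[OF assms(7,8)] by auto
qed

text \<open>The abscissa of e at height y. Each \<open>max\<close> term is a linear bend within height 1/3 of an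
  endpoint; it vanishes at a boundary endpoint, whose column is \<open>rank e\<close>.\<close>
definition edge_x :: "'e \<Rightarrow> real \<Rightarrow> real" where
  "edge_x e y = real (rank e)
     + (real (column (src e)) - real (rank e)) * max 0 (3 * (y - real (level (src e))) + 1)
     + (real (column (tgt e)) - real (rank e)) * max 0 (3 * (real (level (tgt e)) - y) + 1)"

lemma edge_x_straight:
  assumes "e \<in> E" "real (level (tgt e)) \<le> y" "y \<le> real (level (src e))"
    "internal (src e) \<Longrightarrow> y \<le> real (level (src e)) - 1/3"
    "internal (tgt e) \<Longrightarrow> real (level (tgt e)) + 1/3 \<le> y"
  shows "edge_x e y = real (rank e)"
proof -
  have 1: "(real (column (src e)) - real (rank e)) * max 0 (3 * (y - real (level (src e))) + 1) = 0"
    using assms non_internal_src[OF assms(1)] by (cases "internal (src e)") auto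
  have 2: "(real (column (tgt e)) - real (rank e)) * max 0 (3 * (real (level (tgt e)) - y) + 1) = 0"
    using assms non_internal_tgt[OF assms(1)] by (cases "internal (tgt e)") auto
  show ?thesis unfolding edge_x_def 1 2 by simp
qed

lemma edge_x_near_tgt:
  assumes "e \<in> E" "real (level (tgt e)) \<le> y" "y \<le> real (level (tgt e)) + 1/3"
  shows "edge_x e y =
    real (rank e) + (real (column (tgt e)) - real (rank e)) * (3 * (real (level (tgt e)) - y) + 1)"
proof -
  have "real (level (tgt e)) + 1 \<le> real (level (src e))" using level_tgt_plus_one_le_src assms
    by auto
  then have 1: "max 0 (3 * (y - real (level (src e))) + 1) = 0" using assms by auto
  have 2: "max 0 (3 * (real (level (tgt e)) - y) + 1) = 3 * (real (level (tgt e)) - y) + 1"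
    using assms by auto
  show ?thesis unfolding edge_x_def 1 2 by simp
qed

lemma edge_x_near_src:
  assumes "e \<in> E" "real (level (src e)) - 1/3 \<le> y" "y \<le> real (level (src e))"
  shows "edge_x e y =
    real (rank e) + (real (column (src e)) - real (rank e)) * (3 * (y - real (level (src e))) + 1)"
proof -
  have "real (level (tgt e)) + 1 \<le> real (level (src e))" using level_tgt_plus_one_le_src assms
    by auto
  then have 1: "max 0 (3 * (real (level (tgt e)) - y) + 1) = 0" using assms by auto
  have 2: "max 0 (3 * (y - real (level (src e))) + 1) = 3 * (y - real (level (src e))) + 1"
    using assms by auto
  show ?thesis unfolding edge_x_def 1 2 by simp
qed

lemma edge_x_at_src: "e \<in> E \<Longrightarrow> edge_x e (real (level (src e))) = real (column (src e))"
  using edge_x_near_src[of e "real (level (src e))"] by simp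

lemma edge_x_at_tgt: "e \<in> E \<Longrightarrow> edge_x e (real (level (tgt e))) = real (column (tgt e))"
  using edge_x_near_tgt[of e "real (level (tgt e))"] by simp

lemma edge_x_bounds:
  assumes "e \<in> E" "real (level (tgt e)) \<le> y" "y \<le> real (level (src e))"
  shows "0 \<le> edge_x e y" "edge_x e y \<le> real (card E) - 1"
proof -
  have b1: "real (rank e) \<le> real (card E) - 1" using rank_less_card[OF assms(1)] by linarith
  have b2: "real (column (src e)) \<le> real (card E) - 1"
    using column_less_card[OF src_in_V[OF assms(1)]] by linarith
  have b3: "real (column (tgt e)) \<le> real (card E) - 1"
    using column_less_card[OF tgt_in_V[OF assms(1)]] by linarith
  have "0 \<le> edge_x e y \<and> edge_x e y \<le> real (card E) - 1"
  proof (cases "y \<le> real (level (tgt e)) + 1/3")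
    case True
    have l: "0 \<le> 3 * (real (level (tgt e)) - y) + 1" "3 * (real (level (tgt e)) - y) + 1 \<le> 1"
      using True assms by auto
    show ?thesis unfolding edge_x_near_tgt[OF assms(1,2) True]
      using convex_comb_between[OF l, of 0 "real (rank e)" "real (card E) - 1" "real (column (tgt e))"]
        b1 b3 by simp
  next
    case False
    show ?thesis
    proof (cases "real (level (src e)) - 1/3 \<le> y")
      case True
      have l: "0 \<le> 3 * (y - real (level (src e))) + 1" "3 * (y - real (level (src e))) + 1 \<le> 1"
        using True assms by auto
      show ?thesis unfolding edge_x_near_src[OF assms(1) True assms(3)]
        using convex_comb_between[OF l, of 0 "real (rank e)" "real (card E) - 1"
            "real (column (src e))"] b1 b2 by simp
    next
      case False2: False
      have "edge_x e y = real (rank e)" unfolding edge_x_def using False False2 by auto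
      then show ?thesis using b1 by auto
    qed
  qed
  then show "0 \<le> edge_x e y" "edge_x e y \<le> real (card E) - 1" by auto
qed

lemma edge_x_near_incident:
  assumes "\<bar>y - real (level w)\<bar> < 1/3" "y \<noteq> real (level w)"
    "e \<in> E" "real (level (tgt e)) \<le> y" "y \<le> real (level (src e))" "src e = w \<or> tgt e = w"
  shows "edge_x e y =
    real (rank e) + (real (column w) - real (rank e)) * (1 - 3 * \<bar>y - real (level w)\<bar>)"
proof (cases "tgt e = w")
  case True
  then have "real (level w) < y" "y \<le> real (level (tgt e)) + 1/3" using assms by auto
  then show ?thesis using edge_x_near_tgt[OF assms(3,4)] True by (simp add: algebra_simps)
next
  case False
  then have "src e = w" using assms(6) by blast
  then have "y < real (level w)" "real (level (src e)) - 1/3 \<le> y" using assms by auto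
  then show ?thesis using edge_x_near_src[OF assms(3) _ assms(5)] \<open>src e = w\<close>
    by (simp add: algebra_simps)
qed

lemma edge_x_passing_internal:
  assumes "internal w" "\<bar>y - real (level w)\<bar> < 1/3"
    "e \<in> E" "real (level (tgt e)) \<le> y" "y \<le> real (level (src e))" "src e \<noteq> w" "tgt e \<noteq> w"
  shows "edge_x e y = real (rank e)" "level (tgt e) < level w" "level w < level (src e)"
proof -
  have "1 \<le> \<bar>real (level (src e)) - real (level w)\<bar>" "1 \<le> \<bar>real (level (tgt e)) - real (level w)\<bar>"
    using level_separated[OF assms(1)] src_in_V tgt_in_V assms(3,6,7) by auto
  then have src: "real (level w) + 1 \<le> real (level (src e))"
    and tgt: "real (level (tgt e)) + 1 \<le> real (level w)"
    using assms(2,4,5) by (auto simp: abs_if split: if_splits)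
  then show "level (tgt e) < level w" "level w < level (src e)" by simp_all
  have "y \<le> real (level (src e)) - 1/3" "real (level (tgt e)) + 1/3 \<le> y"
    using src tgt assms(2) by arith+
  then show "edge_x e y = real (rank e)" using edge_x_straight[OF assms(3,4,5)] by blast
qed

lemma edge_x_strict_mono_near_internal:
  assumes w: "internal w" "\<bar>y - real (level w)\<bar> < 1/3" "y \<noteq> real (level w)"
    and e1: "e1 \<in> E" "real (level (tgt e1)) \<le> y" "y \<le> real (level (src e1))"
    and e2: "e2 \<in> E" "real (level (tgt e2)) \<le> y" "y \<le> real (level (src e2))"
    and r: "rank e1 < rank e2"
  shows "edge_x e1 y < edge_x e2 y"
proof -
  define l where "l = 1 - 3 * \<bar>y - real (level w)\<bar>"
  have l: "0 < l" "l < 1" using w unfolding l_def by auto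
  obtain c where c: "c \<in> E" "src c = w" "column w = rank c"
    using internal_level_column[OF w(1)] Out_iff by metis
  note near1 = edge_x_near_incident[OF w(2,3) e1, folded l_def, unfolded c(3)]
  note near2 = edge_x_near_incident[OF w(2,3) e2, folded l_def, unfolded c(3)]
  note pass1 = edge_x_passing_internal[OF w(1,2) e1]
  note pass2 = edge_x_passing_internal[OF w(1,2) e2]
  consider "src e1 = w \<or> tgt e1 = w" "src e2 = w \<or> tgt e2 = w"
    | "src e1 = w \<or> tgt e1 = w" "src e2 \<noteq> w" "tgt e2 \<noteq> w"
    | "src e1 \<noteq> w" "tgt e1 \<noteq> w" "src e2 = w \<or> tgt e2 = w"
    | "src e1 \<noteq> w" "tgt e1 \<noteq> w" "src e2 \<noteq> w" "tgt e2 \<noteq> w"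
    by blast
  then show ?thesis
  proof cases
    case 1
    then show ?thesis using near1 near2 convex_comb_strict_mono l r by auto
  next
    case 2
    have "rank c < rank e2"
      using passing_edge_side[OF w(1) e2(1) pass2(2,3)[OF 2(2,3)] e1(1) 2(1) c(1)] c(2) r by auto
    have "real (rank e1) + (real (rank c) - real (rank e1)) * l \<le> max (real (rank e1)) (real (rank c))"
      using l by (intro convex_comb_between(2)[where lo = "min (real (rank e1)) (real (rank c))"]) auto
    then have "real (rank e1) + (real (rank c) - real (rank e1)) * l < real (rank e2)"
      using \<open>rank c < rank e2\<close> r by simp
    then show ?thesis using near1 2(1) pass2(1)[OF 2(2,3)] by simp
  next
    case 3
    have "\<not> rank c < rank e1"
      using passing_edge_side[OF w(1) e1(1) pass1(2,3)[OF 3(1,2)] e2(1) 3(3) c(1)] c(2) r by auto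
    moreover have "rank c \<noteq> rank e1" using rank_inj c(1,2) e1(1) 3(1) by metis
    ultimately have "real (rank e1) < real (rank c)" by simp
    have "min (real (rank e2)) (real (rank c)) \<le> real (rank e2) + (real (rank c) - real (rank e2)) * l"
      using l by (intro convex_comb_between(1)[where hi = "max (real (rank e2)) (real (rank c))"]) auto
    then have "real (rank e1) < real (rank e2) + (real (rank c) - real (rank e2)) * l"
      using \<open>real (rank e1) < real (rank c)\<close> r by simp
    then show ?thesis using near2 3(3) pass1(1)[OF 3(1,2)] by simp
  next
    case 4
    then show ?thesis using pass1(1) pass2(1) r by simp
  qed
qed

lemma edge_x_strict_mono:
  assumes e1: "e1 \<in> E" "real (level (tgt e1)) \<le> y" "y \<le> real (level (src e1))"
    and e2: "e2 \<in> E" "real (level (tgt e2)) \<le> y" "y \<le> real (level (src e2))"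
    and r: "rank e1 < rank e2" and no_vertex: "\<And>w. internal w \<Longrightarrow> real (level w) \<noteq> y"
  shows "edge_x e1 y < edge_x e2 y"
proof (cases "\<exists>w. internal w \<and> \<bar>y - real (level w)\<bar> < 1/3")
  case True
  then show ?thesis using edge_x_strict_mono_near_internal e1 e2 r no_vertex by blast
next
  case False
  have "edge_x e y = real (rank e)"
    if "e \<in> E" "real (level (tgt e)) \<le> y" "y \<le> real (level (src e))" for e
  proof (rule edge_x_straight[OF that])
    show "y \<le> real (level (src e)) - 1/3" if "internal (src e)"
      using False that \<open>y \<le> real (level (src e))\<close> by (auto simp: abs_less_iff)
    show "real (level (tgt e)) + 1/3 \<le> y" if "internal (tgt e)"
      using False that \<open>real (level (tgt e)) \<le> y\<close> by (auto simp: abs_less_iff)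
  qed
  then show ?thesis using e1 e2 r by simp
qed

lemma edge_x_less_iff_rank:
  assumes "e1 \<in> E" "e2 \<in> E" "e1 \<noteq> e2"
    "real (level (tgt e1)) \<le> y" "y \<le> real (level (src e1))"
    "real (level (tgt e2)) \<le> y" "y \<le> real (level (src e2))"
    "\<And>w. internal w \<Longrightarrow> real (level w) \<noteq> y"
  shows "edge_x e1 y < edge_x e2 y \<longleftrightarrow> rank e1 < rank e2"
  using edge_x_strict_mono[of e1 y e2] edge_x_strict_mono[of e2 y e1] rank_inj[of e1 e2] assms
  by (metis less_asym linorder_neqE_nat)

definition edge_y :: "'e \<Rightarrow> real \<Rightarrow> real" where
  "edge_y e t = real (level (src e)) - t * (real (level (src e)) - real (level (tgt e)))"

definition edge_arc :: "'e \<Rightarrow> real \<Rightarrow> real \<times> real" where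
  "edge_arc e = (\<lambda>t. (edge_x e (edge_y e t), edge_y e t))"

definition vertex_point :: "'v \<Rightarrow> real \<times> real" where
  "vertex_point v = (real (column v), real (level v))"

lemma snd_vertex_point: "snd (vertex_point v) = real (level v)"
  unfolding vertex_point_def by simp

lemma edge_y_eq_iff: assumes "e \<in> E"
  shows "edge_y e t = y \<longleftrightarrow>
    t = (real (level (src e)) - y) / (real (level (src e)) - real (level (tgt e)))"
proof -
  have "real (level (src e)) - real (level (tgt e)) > 0" using level_tgt_plus_one_le_src[OF assms]
    by auto
  then show ?thesis unfolding edge_y_def by (auto simp: field_simps)
qed

lemma path_image_edge_arc: assumes "e \<in> E"
  shows "p \<in> path_image (edge_arc e) \<longleftrightarrow>
    real (level (tgt e)) \<le> snd p \<and> snd p \<le> real (level (src e)) \<and> fst p = edge_x e (snd p)"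
proof -
  have h: "real (level (src e)) - real (level (tgt e)) > 0"
    using level_tgt_plus_one_le_src[OF assms] by auto
  show ?thesis
  proof
    assume "p \<in> path_image (edge_arc e)"
    then obtain t where t: "0 \<le> t" "t \<le> 1" "p = edge_arc e t" unfolding path_image_def by auto
    have
      "t * (real (level (src e)) - real (level (tgt e))) \<le> real (level (src e)) - real (level (tgt e))"
      using t h by (simp add: mult_left_le_one_le)
    moreover have "0 \<le> t * (real (level (src e)) - real (level (tgt e)))" using t h by auto
    ultimately show
      "real (level (tgt e)) \<le> snd p \<and> snd p \<le> real (level (src e)) \<and> fst p = edge_x e (snd p)"
      using t unfolding edge_arc_def edge_y_def by auto
  next
    assume a:
      "real (level (tgt e)) \<le> snd p \<and> snd p \<le> real (level (src e)) \<and> fst p = edge_x e (snd p)"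
    define t where
      "t = (real (level (src e)) - snd p) / (real (level (src e)) - real (level (tgt e)))"
    have "edge_y e t = snd p" using edge_y_eq_iff[OF assms] t_def by auto
    moreover have "0 \<le> t" "t \<le> 1" using a h unfolding t_def by (auto simp: field_simps)
    ultimately have "edge_arc e t = p" "t \<in> {0..1}" using a unfolding edge_arc_def
      by (auto simp: prod_eq_iff)
    then show "p \<in> path_image (edge_arc e)" unfolding path_image_def by force
  qed
qed

lemma xcross_edge_arc: assumes "e \<in> E" "real (level (tgt e)) \<le> y" "y \<le> real (level (src e))"
  shows "xcross edge_arc e y = edge_x e y"
proof -
  have h: "real (level (src e)) - real (level (tgt e)) > 0"
    using level_tgt_plus_one_le_src[OF assms(1)] by auto
  define t where "t = (real (level (src e)) - y) / (real (level (src e)) - real (level (tgt e)))"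
  have ty: "edge_y e t = y" using edge_y_eq_iff[OF assms(1)] t_def by auto
  have "0 \<le> t" "t \<le> 1" using assms h unfolding t_def by (auto simp: field_simps)
  have "(THE t. 0 \<le> t \<and> t \<le> 1 \<and> snd (edge_arc e t) = y) = t"
  proof (rule the_equality)
    show "0 \<le> t \<and> t \<le> 1 \<and> snd (edge_arc e t) = y" using ty \<open>0 \<le> t\<close> \<open>t \<le> 1\<close> unfolding edge_arc_def
      by auto
    show "t' = t" if "0 \<le> t' \<and> t' \<le> 1 \<and> snd (edge_arc e t') = y" for t'
      using that edge_y_eq_iff[OF assms(1)] t_def unfolding edge_arc_def by auto
  qed
  then show ?thesis unfolding xcross_def edge_arc_def using ty by simp
qed

lemma arc_edge_arc: assumes "e \<in> E" shows "arc (edge_arc e)"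
  unfolding arc_def
proof
  show "path (edge_arc e)" unfolding path_def edge_arc_def edge_x_def edge_y_def
    by (intro continuous_intros continuous_on_max)
  show "inj_on (edge_arc e) {0..1}"
  proof (rule inj_onI)
    fix s t assume "edge_arc e s = edge_arc e t"
    then have "edge_y e s = edge_y e t" unfolding edge_arc_def by auto
    then show "s = t" using edge_y_eq_iff[OF assms] by metis
  qed
qed

lemma edge_x_at_internal_level:
  assumes "internal w" "e \<in> E" "real (level (tgt e)) \<le> real (level w)"
    "real (level w) \<le> real (level (src e))"
  shows "edge_x e (real (level w)) =
    (if src e = w \<or> tgt e = w then real (column w) else real (rank e))"
  using edge_x_at_src[OF assms(2)] edge_x_at_tgt[OF assms(2)]
    edge_x_passing_internal[OF assms(1) _ assms(2-4)]
  by auto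

lemma column_internal_ne_rank:
  assumes "internal w" "e \<in> E" "src e \<noteq> w"
  shows "column w \<noteq> rank e"
  using internal_level_column[OF assms(1)] Out_iff rank_inj assms(2,3) by metis

lemma inj_on_vertex_point: "inj_on vertex_point V"
proof (rule inj_onI, rule ccontr)
  fix v w assume v: "v \<in> V" and w: "w \<in> V" and "vertex_point v = vertex_point w" and "v \<noteq> w"
  then have col: "column v = column w" and lev: "level v = level w" unfolding vertex_point_def
    by auto
  then have "\<not> internal v" "\<not> internal w"
    using level_separated \<open>v \<noteq> w\<close> v w by fastforce+
  then have "(In v = {} \<and> In w = {}) \<or> (Out v = {} \<and> Out w = {})"
    using lev v w internal_iff level_def by (metis Suc_eq_plus1 nat.distinct(1))
  then show False
  proof
    assume "In v = {} \<and> In w = {}"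
    then obtain ev ew where "ev \<in> E" "src ev = v" "column v = rank ev" "ew \<in> E" "src ew = w"
      "column w = rank ew"
      using source_vertex v w by metis
    then show False using col rank_inj \<open>v \<noteq> w\<close> by metis
  next
    assume "Out v = {} \<and> Out w = {}"
    then obtain ev ew where "ev \<in> E" "tgt ev = v" "column v = rank ev" "ew \<in> E" "tgt ew = w"
      "column w = rank ew"
      using sink_vertex v w by metis
    then show False using col rank_inj \<open>v \<noteq> w\<close> by metis
  qed
qed

lemma edge_arcs_meet_at_common_ends:
  assumes e: "e \<in> E" and e': "e' \<in> E" and ne: "e \<noteq> e'"
    and p: "p \<in> path_image (edge_arc e)" "p \<in> path_image (edge_arc e')"
  shows "p \<in> vertex_point ` ({src e, tgt e} \<inter> {src e', tgt e'})"
proof -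
  define y where "y = snd p"
  have r: "real (level (tgt e)) \<le> y" "y \<le> real (level (src e))" "fst p = edge_x e y"
    using p path_image_edge_arc[OF e] y_def by auto
  have r': "real (level (tgt e')) \<le> y" "y \<le> real (level (src e'))" "fst p = edge_x e' y"
    using p path_image_edge_arc[OF e'] y_def by auto
  show ?thesis
  proof (cases "\<exists>w. internal w \<and> real (level w) = y")
    case False
    then have no_vertex: "\<And>w. internal w \<Longrightarrow> real (level w) \<noteq> y" by auto
    have "rank e \<noteq> rank e'" using rank_inj[OF e e'] ne by blast
    then have "edge_x e y \<noteq> edge_x e' y"
      using edge_x_less_iff_rank[OF e e' ne r(1,2) r'(1,2) no_vertex]
        edge_x_less_iff_rank[OF e' e ne[symmetric] r'(1,2) r(1,2) no_vertex] by auto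
    then show ?thesis using r(3) r'(3) by simp
  next
    case True
    then obtain w where w: "internal w" "real (level w) = y" by auto
    have x: "fst p = (if src e = w \<or> tgt e = w then real (column w) else real (rank e))"
      "fst p = (if src e' = w \<or> tgt e' = w then real (column w) else real (rank e'))"
      using edge_x_at_internal_level[OF w(1) e, unfolded w(2), OF r(1,2)]
        edge_x_at_internal_level[OF w(1) e', unfolded w(2), OF r'(1,2)] r(3) r'(3) by simp_all
    have "src e = w \<or> tgt e = w"
    proof (rule ccontr)
      assume off: "\<not> (src e = w \<or> tgt e = w)"
      then show False
        using x column_internal_ne_rank[OF w(1) e] column_internal_ne_rank[OF w(1) e']
          rank_inj[OF e e'] ne
        by (auto split: if_splits)
    qed
    moreover have "src e' = w \<or> tgt e' = w"
    proof (rule ccontr)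
      assume off: "\<not> (src e' = w \<or> tgt e' = w)"
      then show False
        using x column_internal_ne_rank[OF w(1) e] column_internal_ne_rank[OF w(1) e']
          rank_inj[OF e e'] ne
        by (auto split: if_splits)
    qed
    moreover have "p = vertex_point w"
    proof -
      have "fst p = real (column w)" using x(1) \<open>src e = w \<or> tgt e = w\<close> by simp
      then show ?thesis using w(2) unfolding vertex_point_def y_def by (simp add: prod_eq_iff)
    qed
    ultimately have "w \<in> {src e, tgt e} \<inter> {src e', tgt e'}" "p = vertex_point w" by auto
    then show ?thesis by (rule rev_image_eqI)
  qed
qed

lemma vertex_point_on_edge_arc:
  assumes v: "v \<in> V" and e: "e \<in> E" and p: "vertex_point v \<in> path_image (edge_arc e)"
  shows "v = src e \<or> v = tgt e"
proof -
  have r: "real (level (tgt e)) \<le> real (level v)" "real (level v) \<le> real (level (src e))"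
    "real (column v) = edge_x e (real (level v))"
    using path_image_edge_arc[OF e, of "vertex_point v"] p unfolding vertex_point_def by auto
  consider "internal v" | "In v = {}" | "Out v = {}" using internal_iff v by blast
  then show ?thesis
  proof cases
    case 1
    show ?thesis
    proof (rule ccontr)
      assume n: "\<not> (v = src e \<or> v = tgt e)"
      then have "real (column v) = real (rank e)" using edge_x_at_internal_level[OF 1 e r(1,2)] r(3)
        by auto
      then show False using column_internal_ne_rank[OF 1 e] n by auto
    qed
  next
    case 2
    then obtain ev where ev: "ev \<in> E" "src ev = v" "level v = card E + 1" "column v = rank ev"
      using source_vertex[OF v] by metis
    then have "level (src e) = card E + 1" using r(2) level_le[of "src e"] by linarith
    then have "rank e = rank ev"
      using r(3) ev edge_x_at_src[OF e] non_internal_src[OF e] internal_level_bounds by fastforce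
    then show ?thesis using rank_inj ev e by metis
  next
    case 3
    then obtain ev where ev: "ev \<in> E" "tgt ev = v" "level v = 0" "column v = rank ev"
      using sink_vertex[OF v] by metis
    then have "level (tgt e) = 0" using r(1) by linarith
    then have "rank e = rank ev"
      using r(3) ev edge_x_at_tgt[OF e] non_internal_tgt[OF e] internal_level_bounds by fastforce
    then show ?thesis using rank_inj ev e by metis
  qed
qed

lemma edge_arcs_join_ends:
  "\<forall>e\<in>E. arc (edge_arc e) \<and> pathstart (edge_arc e) = vertex_point (src e) \<and>
     pathfinish (edge_arc e) = vertex_point (tgt e)"
  using arc_edge_arc edge_x_at_src edge_x_at_tgt
  unfolding pathstart_def pathfinish_def edge_arc_def vertex_point_def edge_y_def by auto

lemma edge_arcs_meet_only_at_ends: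
  "\<forall>e\<in>E. \<forall>e'\<in>E. e \<noteq> e' \<longrightarrow> path_image (edge_arc e) \<inter> path_image (edge_arc e') \<subseteq>
     vertex_point ` ({src e, tgt e} \<inter> {src e', tgt e'})"
  using edge_arcs_meet_at_common_ends by blast

lemma vertices_off_edge_arcs:
  "\<forall>v\<in>V. \<forall>e\<in>E. vertex_point v \<in> path_image (edge_arc e) \<longrightarrow> v = src e \<or> v = tgt e"
  using vertex_point_on_edge_arc by blast

lemma sources_on_top:
  "\<forall>v. is_source V E tgt v \<longrightarrow> snd (vertex_point v) = real (card E) + 1 \<and>
     -1 \<le> fst (vertex_point v) \<and> fst (vertex_point v) \<le> real (card E)"
proof (intro allI impI)
  fix v assume "is_source V E tgt v"
  then have v: "v \<in> V" "In v = {}" unfolding is_source_def by auto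
  then have "level v = card E + 1" "column v < card E"
    using source_vertex column_less_card by metis+
  then show "snd (vertex_point v) = real (card E) + 1 \<and>
      -1 \<le> fst (vertex_point v) \<and> fst (vertex_point v) \<le> real (card E)"
    unfolding vertex_point_def by auto
qed

lemma sinks_on_bottom:
  "\<forall>v. is_sink V E src v \<longrightarrow> snd (vertex_point v) = 0 \<and>
     -1 \<le> fst (vertex_point v) \<and> fst (vertex_point v) \<le> real (card E)"
proof (intro allI impI)
  fix v assume "is_sink V E src v"
  then have v: "v \<in> V" "Out v = {}" unfolding is_sink_def by auto
  then have "level v = 0" "column v < card E"
    using sink_vertex column_less_card by metis+
  then show "snd (vertex_point v) = 0 \<and>
      -1 \<le> fst (vertex_point v) \<and> fst (vertex_point v) \<le> real (card E)"
    unfolding vertex_point_def by auto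
qed

lemma internal_vertices_inside:
  "\<forall>v. internal v \<longrightarrow> -1 < fst (vertex_point v) \<and> fst (vertex_point v) < real (card E) \<and>
     0 < snd (vertex_point v) \<and> snd (vertex_point v) < real (card E) + 1"
  using column_less_card internal_iff internal_level_bounds
  unfolding vertex_point_def by fastforce

lemma edge_arcs_inside:
  "\<forall>e\<in>E. \<forall>t. 0 < t \<and> t < 1 \<longrightarrow> -1 < fst (edge_arc e t) \<and> fst (edge_arc e t) < real (card E) \<and>
     0 < snd (edge_arc e t) \<and> snd (edge_arc e t) < real (card E) + 1"
proof (intro ballI allI impI)
  fix e and t :: real assume e: "e \<in> E" and t: "0 < t \<and> t < 1"
  define D where "D = real (level (src e)) - real (level (tgt e))"
  have "0 < D" using level_tgt_plus_one_le_src[OF e] unfolding D_def by auto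
  then have "0 < t * D" "t * D < D" using t mult_strict_right_mono[of t 1 D] by auto
  then have y: "real (level (tgt e)) < edge_y e t" "edge_y e t < real (level (src e))"
    unfolding edge_y_def D_def by auto
  moreover have "real (level (src e)) \<le> real (card E) + 1" using level_le[of "src e"] by simp
  moreover note edge_x_bounds[OF e less_imp_le[OF y(1)] less_imp_le[OF y(2)]]
  ultimately show "-1 < fst (edge_arc e t) \<and> fst (edge_arc e t) < real (card E) \<and>
      0 < snd (edge_arc e t) \<and> snd (edge_arc e t) < real (card E) + 1"
    unfolding edge_arc_def by auto
qed

lemma edge_arcs_descend:
  "\<forall>e\<in>E. \<forall>s t. 0 \<le> s \<and> s < t \<and> t \<le> 1 \<longrightarrow> snd (edge_arc e t) < snd (edge_arc e s)"
proof (intro ballI allI impI)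
  fix e and s t :: real assume e: "e \<in> E" and st: "0 \<le> s \<and> s < t \<and> t \<le> 1"
  have "0 < real (level (src e)) - real (level (tgt e))" using level_tgt_plus_one_le_src[OF e]
    by auto
  then have "s * (real (level (src e)) - real (level (tgt e))) <
      t * (real (level (src e)) - real (level (tgt e)))"
    using st by (intro mult_strict_right_mono) auto
  then show "snd (edge_arc e t) < snd (edge_arc e s)" unfolding edge_arc_def edge_y_def by simp
qed

lemma upward_BP_embedding_construction:
  "upward_BP_embedding V E src tgt vertex_point edge_arc (-1) (real (card E)) 0 (real (card E) + 1)"
  unfolding upward_BP_embedding_def BP_embedding_def
  by (intro conjI inj_on_vertex_point edge_arcs_join_ends edge_arcs_meet_only_at_ends
      vertices_off_edge_arcs sources_on_top sinks_on_bottom internal_vertices_inside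
      edge_arcs_inside edge_arcs_descend) simp_all

end

section \<open>The order of the constructed embedding\<close>

locale planar_progressive_cut = planar_progressive +
  fixes n :: nat and ys :: "nat \<Rightarrow> real"
  assumes valid_cut: "valid_cut V E src tgt vertex_point 0 (real (card E) + 1) n ys"
begin

lemma cut_ge_one: "1 \<le> n"
  and cut_top: "ys 0 = real (card E) + 1"
  and cut_bottom: "ys n = 0"
  and cut_decreasing: "j < n \<Longrightarrow> ys (Suc j) < ys j"
  using valid_cut unfolding valid_cut_def by simp_all

lemma cut_avoids_vertices: "0 < j \<Longrightarrow> j < n \<Longrightarrow> v \<in> V \<Longrightarrow> real (level v) \<noteq> ys j"
  using valid_cut unfolding valid_cut_def snd_vertex_point by simp

lemma cut_strip_unique:
  assumes "j \<in> {1..n}" "internal v" "internal w"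
    "ys j < real (level v)" "real (level v) < ys (j - 1)"
    "ys j < real (level w)" "real (level w) < ys (j - 1)"
  shows "v = w"
proof -
  have "\<forall>j\<in>{1..n}. \<forall>v w. internal v \<and> internal w \<and>
      ys j < real (level v) \<and> real (level v) < ys (j - 1) \<and>
      ys j < real (level w) \<and> real (level w) < ys (j - 1) \<longrightarrow> v = w"
    using valid_cut unfolding valid_cut_def snd_vertex_point by simp
  then show ?thesis using assms by blast
qed

lemma cut_antimono: "j < k \<Longrightarrow> k \<le> n \<Longrightarrow> ys k < ys j"
proof (induction k)
  case (Suc k)
  then show ?case using cut_decreasing[of k] by (cases "j = k") auto
qed simp

lemma cut_bounds: assumes "j \<le> n" shows "0 \<le> ys j" "ys j \<le> real (card E) + 1"
  using cut_antimono[of j n] cut_antimono[of 0 j] cut_bottom cut_top assms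
  by (cases "j = n"; cases "j = 0"; auto)+

lemma cut_avoids_internal: assumes "j \<le> n" "internal w" shows "real (level w) \<noteq> ys j"
proof -
  have "1 \<le> level w" "level w \<le> card E" "w \<in> V"
    using internal_level_bounds internal_iff assms(2) by auto
  then show ?thesis
    using cut_top cut_bottom cut_avoids_vertices[of j w] assms(1)
    by (cases "j = 0"; cases "j = n") auto
qed

abbreviation "strip j \<equiv> strip_edges E src tgt vertex_point ys j"
abbreviation "centre j v \<equiv> strip_vertex V E src tgt vertex_point ys j v"
abbreviation "star j e \<equiv> in_star V E src tgt vertex_point ys j e"
abbreviation "key j e \<equiv> comp_key V E src tgt vertex_point edge_arc ys j e"
abbreviation "canon j \<equiv> canon_less V E src tgt vertex_point edge_arc ys j"

lemma strip_iff:
  "e \<in> strip j \<longleftrightarrow> e \<in> E \<and> real (level (tgt e)) < ys (j - 1) \<and> ys j < real (level (src e))"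
  unfolding strip_edges_def snd_vertex_point by auto

lemma strip_subset: "strip j \<subseteq> E"
  unfolding strip_edges_def by auto

lemma centre_iff: "centre j v \<longleftrightarrow> internal v \<and> ys j < real (level v) \<and> real (level v) < ys (j - 1)"
  unfolding strip_vertex_def snd_vertex_point by auto

lemma centre_unique: "j \<in> {1..n} \<Longrightarrow> centre j v \<Longrightarrow> centre j w \<Longrightarrow> v = w"
  unfolding centre_iff by (rule cut_strip_unique) auto

lemma strip_src_above:
  assumes j: "j \<in> {1..n}" and e: "e \<in> strip j" and ns: "\<not> centre j (src e)"
  shows "ys (j - 1) \<le> real (level (src e))"
proof (cases "internal (src e)")
  case True
  then show ?thesis using ns e centre_iff strip_iff by auto
next
  case False
  moreover have "j - 1 \<le> n" using j by auto
  ultimately show ?thesis using e non_internal_src strip_iff cut_bounds(2)[of "j - 1"] by auto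
qed

lemma strip_tgt_below:
  assumes j: "j \<in> {1..n}" and e: "e \<in> strip j" and ns: "\<not> centre j (tgt e)"
  shows "real (level (tgt e)) \<le> ys j"
proof (cases "internal (tgt e)")
  case True
  then show ?thesis using ns e centre_iff strip_iff by auto
next
  case False
  moreover have "j \<le> n" using j by auto
  ultimately show ?thesis using e non_internal_tgt strip_iff cut_bounds(1)[of j] by auto
qed

lemma xcross_top:
  assumes "j \<in> {1..n}" "e \<in> strip j" "\<not> centre j (src e)"
  shows "xcross edge_arc e (ys (j - 1)) = edge_x e (ys (j - 1))"
    "real (level (tgt e)) \<le> ys (j - 1)" "ys (j - 1) \<le> real (level (src e))"
  using strip_src_above[OF assms] assms(2) xcross_edge_arc strip_iff by auto

lemma xcross_bottom:
  assumes "j \<in> {1..n}" "e \<in> strip j" "\<not> centre j (tgt e)"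
  shows "xcross edge_arc e (ys j) = edge_x e (ys j)"
    "real (level (tgt e)) \<le> ys j" "ys j \<le> real (level (src e))"
  using strip_tgt_below[OF assms] assms(2) xcross_edge_arc strip_iff by auto

lemma canon_iff_prec_no_centre:
  assumes j: "j \<in> {1..n}" and e: "e \<in> strip j" and e': "e' \<in> strip j" and ne: "e \<noteq> e'"
    and no_centre: "\<And>v. \<not> centre j v"
  shows "canon j e e' \<longleftrightarrow> e \<sqsubset> e'"
proof -
  have not_star: "\<not> star j f" for f using no_centre unfolding in_star_def by auto
  have "key j f = xcross edge_arc f (ys (j - 1))" for f
    unfolding comp_key_def using not_star by simp
  moreover have E: "e \<in> E" "e' \<in> E" using e e' strip_iff by auto
  moreover note top = xcross_top[OF j e no_centre] xcross_top[OF j e' no_centre]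
  moreover have "\<And>w. internal w \<Longrightarrow> real (level w) \<noteq> ys (j - 1)" using cut_avoids_internal j by auto
  ultimately show ?thesis
    using edge_x_less_iff_rank[OF E ne] prec_iff_rank_less[OF E] e e' not_star
    unfolding canon_less_def by auto
qed

context
  fixes j v
  assumes j: "j \<in> {1..n}" and centre_v: "centre j v"
begin

lemma centre_level: "internal v" "ys j < real (level v)" "real (level v) < ys (j - 1)"
  using centre_v unfolding centre_iff by auto

lemma the_centre: "(THE v. centre j v) = v"
  using centre_v centre_unique[OF j _ centre_v] by blast

lemma star_iff: "star j f \<longleftrightarrow> src f = v \<or> tgt f = v"
  unfolding in_star_def using centre_v centre_unique[OF j _ centre_v] by blast

lemma In_centre_in_strip: "a \<in> In v \<Longrightarrow> a \<in> strip j"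
  using level_tgt_plus_one_le_src[of a] centre_level In_iff strip_iff by auto

lemma not_centre_src_In: "a \<in> In v \<Longrightarrow> \<not> centre j (src a)"
  using centre_unique[OF j centre_v] src_ne_tgt In_iff by metis

lemma not_centre_tgt_Out: "a \<in> E \<Longrightarrow> src a = v \<Longrightarrow> \<not> centre j (tgt a)"
  using centre_unique[OF j centre_v] src_ne_tgt by metis

lemma not_centre_off_star: "src f \<noteq> v \<Longrightarrow> tgt f \<noteq> v \<Longrightarrow> \<not> centre j (src f) \<and> \<not> centre j (tgt f)"
  using centre_unique[OF j _ centre_v] by blast

definition star_key :: real where
  "star_key = Min ((\<lambda>a. edge_x a (ys (j - 1))) ` In v)"

lemma key_centre:
  "key j f = (if src f = v \<or> tgt f = v then star_key else xcross edge_arc f (ys (j - 1)))"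
proof -
  have "(\<lambda>a. xcross edge_arc a (ys (j - 1))) ` In v = (\<lambda>a. edge_x a (ys (j - 1))) ` In v"
    using xcross_top(1)[OF j In_centre_in_strip not_centre_src_In] by (intro image_cong) auto
  then show ?thesis unfolding comp_key_def Let_def the_centre star_iff star_key_def by simp
qed

lemma off_star_passes_centre:
  assumes "f \<in> strip j" "src f \<noteq> v" "tgt f \<noteq> v"
  shows "xcross edge_arc f (ys (j - 1)) = edge_x f (ys (j - 1))"
    "real (level (tgt f)) \<le> ys (j - 1)" "ys (j - 1) \<le> real (level (src f))"
    "level (tgt f) < level v" "level v < level (src f)"
proof -
  note ns = not_centre_off_star[OF assms(2,3)]
  note top = xcross_top[OF j assms(1) conjunct1[OF ns]]
  note bot = xcross_bottom[OF j assms(1) conjunct2[OF ns]]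
  show "xcross edge_arc f (ys (j - 1)) = edge_x f (ys (j - 1))"
    "real (level (tgt f)) \<le> ys (j - 1)" "ys (j - 1) \<le> real (level (src f))"
    using top by auto
  show "level (tgt f) < level v" "level v < level (src f)"
    using top bot centre_level of_nat_less_iff by (smt (verit))+
qed

lemma edge_x_top_less_iff_rank:
  assumes "f \<in> strip j" "src f \<noteq> v" "tgt f \<noteq> v" "a \<in> In v"
  shows "edge_x a (ys (j - 1)) < edge_x f (ys (j - 1)) \<longleftrightarrow> rank a < rank f"
    "edge_x f (ys (j - 1)) < edge_x a (ys (j - 1)) \<longleftrightarrow> rank f < rank a"
proof -
  have E: "a \<in> E" "f \<in> E" "a \<noteq> f" using assms In_iff strip_iff by auto
  note pf = off_star_passes_centre[OF assms(1-3)]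
  note pa = xcross_top[OF j In_centre_in_strip[OF assms(4)] not_centre_src_In[OF assms(4)]]
  have "\<And>w. internal w \<Longrightarrow> real (level w) \<noteq> ys (j - 1)" using cut_avoids_internal j by auto
  then show "edge_x a (ys (j - 1)) < edge_x f (ys (j - 1)) \<longleftrightarrow> rank a < rank f"
    "edge_x f (ys (j - 1)) < edge_x a (ys (j - 1)) \<longleftrightarrow> rank f < rank a"
    using edge_x_less_iff_rank E pa(2,3) pf(2,3) by (metis, metis)
qed

lemma star_key_less_iff:
  assumes f: "f \<in> strip j" "src f \<noteq> v" "tgt f \<noteq> v" and g: "g \<in> E" "src g = v \<or> tgt g = v"
  shows "star_key < edge_x f (ys (j - 1)) \<longleftrightarrow> rank g < rank f"
proof -
  have fE: "f \<in> E" using f strip_iff by auto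
  have In_ne: "In v \<noteq> {}" using centre_level internal_iff by auto
  note side = passing_edge_side[OF centre_level(1) fE off_star_passes_centre(4,5)[OF f] _ _ g]
  have "star_key < edge_x f (ys (j - 1)) \<longleftrightarrow> (\<exists>a\<in>In v. rank a < rank f)"
    unfolding star_key_def using Min_less_iff[of "(\<lambda>a. edge_x a (ys (j - 1))) ` In v"]
      edge_x_top_less_iff_rank(1)[OF f] finite_In In_ne by auto
  also have "\<dots> \<longleftrightarrow> rank g < rank f" using side In_ne In_iff by blast
  finally show ?thesis .
qed

lemma less_star_key_iff:
  assumes f: "f \<in> strip j" "src f \<noteq> v" "tgt f \<noteq> v" and g: "g \<in> E" "src g = v \<or> tgt g = v"
  shows "edge_x f (ys (j - 1)) < star_key \<longleftrightarrow> rank f < rank g"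
proof -
  have fE: "f \<in> E" using f strip_iff by auto
  have In_ne: "In v \<noteq> {}" using centre_level internal_iff by auto
  have rank_ne: "rank f \<noteq> rank h" if "h \<in> E" "src h = v \<or> tgt h = v" for h
    using rank_inj[OF fE that(1)] that f by auto
  note side = passing_edge_side[OF centre_level(1) fE off_star_passes_centre(4,5)[OF f] _ _ g]
  have "edge_x f (ys (j - 1)) < star_key \<longleftrightarrow> (\<forall>a\<in>In v. rank f < rank a)"
    unfolding star_key_def using Min_gr_iff[of "(\<lambda>a. edge_x a (ys (j - 1))) ` In v"]
      edge_x_top_less_iff_rank(2)[OF f] finite_In In_ne by auto
  also have "\<dots> \<longleftrightarrow> rank f < rank g"
  proof -
    have "rank f < rank a \<longleftrightarrow> rank f < rank g" if "a \<in> In v" for a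
      using side[of a] rank_ne[of a] rank_ne[OF g] that In_iff by auto
    then show ?thesis using In_ne by blast
  qed
  finally show ?thesis .
qed

lemma canon_iff_prec_in_star:
  assumes e: "e \<in> strip j" and e': "e' \<in> strip j" and ne: "e \<noteq> e'"
    and ie: "src e = v \<or> tgt e = v" and ie': "src e' = v \<or> tgt e' = v"
  shows "canon j e e' \<longleftrightarrow> e \<sqsubset> e'"
proof -
  have E: "e \<in> E" "e' \<in> E" using e e' strip_iff by auto
  have canon: "canon j e e' \<longleftrightarrow> (tgt e = v \<and> src e' = v) \<or>
        (tgt e = v \<and> tgt e' = v \<and> xcross edge_arc e (ys (j - 1)) < xcross edge_arc e' (ys (j - 1)))
          \<or>
        (src e = v \<and> src e' = v \<and> xcross edge_arc e (ys j) < xcross edge_arc e' (ys j))"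
    unfolding canon_less_def Let_def the_centre star_iff key_centre using e e' ie ie' by simp
  have top: "\<And>w. internal w \<Longrightarrow> real (level w) \<noteq> ys (j - 1)"
    and bot: "\<And>w. internal w \<Longrightarrow> real (level w) \<noteq> ys j"
    using cut_avoids_internal j by auto
  consider "tgt e = v" "src e' = v" | "tgt e = v" "tgt e' = v" | "src e = v" "tgt e' = v"
    | "src e = v" "src e' = v"
    using ie ie' by blast
  then show ?thesis
  proof cases
    case 1
    then show ?thesis using canon reach_consecutive reach_imp_prec E by auto
  next
    case 2
    then have "e \<in> In v" "e' \<in> In v" using E In_iff by auto
    note pe = xcross_top[OF j e not_centre_src_In[OF \<open>e \<in> In v\<close>]]
    note pe' = xcross_top[OF j e' not_centre_src_In[OF \<open>e' \<in> In v\<close>]]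
    have "src e' \<noteq> v" using src_ne_tgt[OF E(2)] 2(2) by auto
    then have "canon j e e' \<longleftrightarrow> edge_x e (ys (j - 1)) < edge_x e' (ys (j - 1))"
      using canon 2 pe(1) pe'(1) by auto
    also have "\<dots> \<longleftrightarrow> rank e < rank e'"
      using edge_x_less_iff_rank[OF E ne pe(2,3) pe'(2,3) top] .
    finally show ?thesis using prec_iff_rank_less[OF E] by simp
  next
    case 3
    then have "e' \<sqsubset> e" using reach_consecutive reach_imp_prec E by auto
    then show ?thesis using canon 3 src_ne_tgt E prec_asym by metis
  next
    case 4
    note pe = xcross_bottom[OF j e not_centre_tgt_Out[OF E(1) 4(1)]]
    note pe' = xcross_bottom[OF j e' not_centre_tgt_Out[OF E(2) 4(2)]]
    have "tgt e \<noteq> v" using src_ne_tgt[OF E(1)] 4(1) by auto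
    then have "canon j e e' \<longleftrightarrow> edge_x e (ys j) < edge_x e' (ys j)"
      using canon 4 pe(1) pe'(1) by auto
    also have "\<dots> \<longleftrightarrow> rank e < rank e'"
      using edge_x_less_iff_rank[OF E ne pe(2,3) pe'(2,3) bot] .
    finally show ?thesis using prec_iff_rank_less[OF E] by simp
  qed
qed

lemma canon_iff_prec_centre:
  assumes e: "e \<in> strip j" and e': "e' \<in> strip j" and ne: "e \<noteq> e'"
  shows "canon j e e' \<longleftrightarrow> e \<sqsubset> e'"
proof -
  have E: "e \<in> E" "e' \<in> E" using e e' strip_iff by auto
  have canon_off_star: "canon j e e' \<longleftrightarrow> key j e < key j e'"
    if "\<not> ((src e = v \<or> tgt e = v) \<and> (src e' = v \<or> tgt e' = v))"
    using that e e' unfolding canon_less_def Let_def the_centre star_iff by auto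
  have top: "\<And>w. internal w \<Longrightarrow> real (level w) \<noteq> ys (j - 1)"
    using cut_avoids_internal j by auto
  consider "src e = v \<or> tgt e = v" "src e' = v \<or> tgt e' = v"
    | "src e = v \<or> tgt e = v" "src e' \<noteq> v" "tgt e' \<noteq> v"
    | "src e \<noteq> v" "tgt e \<noteq> v" "src e' = v \<or> tgt e' = v"
    | "src e \<noteq> v" "tgt e \<noteq> v" "src e' \<noteq> v" "tgt e' \<noteq> v"
    by blast
  then show ?thesis
  proof cases
    case 1
    then show ?thesis using canon_iff_prec_in_star[OF e e' ne] by blast
  next
    case 2
    then show ?thesis
      using canon_off_star key_centre star_key_less_iff[OF e' 2(2,3) E(1) 2(1)]
        off_star_passes_centre(1)[OF e' 2(2,3)] prec_iff_rank_less[OF E] by auto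
  next
    case 3
    then show ?thesis
      using canon_off_star key_centre less_star_key_iff[OF e 3(1,2) E(2) 3(3)]
        off_star_passes_centre(1)[OF e 3(1,2)] prec_iff_rank_less[OF E] by auto
  next
    case 4
    note pe = off_star_passes_centre[OF e 4(1,2)] and pe' = off_star_passes_centre[OF e' 4(3,4)]
    show ?thesis
      using canon_off_star key_centre 4 pe(1) pe'(1) prec_iff_rank_less[OF E]
        edge_x_less_iff_rank[OF E ne pe(2,3) pe'(2,3) top] by auto
  qed
qed

end

lemma canon_iff_prec:
  assumes "j \<in> {1..n}" "e \<in> strip j" "e' \<in> strip j" "e \<noteq> e'"
  shows "canon j e e' \<longleftrightarrow> e \<sqsubset> e'"
  using canon_iff_prec_centre canon_iff_prec_no_centre assms by blast

lemma canon_list_eq_sorted_list: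
  assumes j: "j \<in> {1..n}"
  shows "canon_list V E src tgt vertex_point edge_arc ys j = sorted_list (strip j)"
proof -
  have "sorted_wrt (canon j) L = sorted_wrt (\<sqsubset>) L" if L: "distinct L" "set L = strip j" for L
  proof -
    have "canon j (L ! i) (L ! k) \<longleftrightarrow> L ! i \<sqsubset> L ! k" if ik: "i < k" "k < length L" for i k
    proof -
      have "L ! i \<in> strip j" "L ! k \<in> strip j" using ik L(2) nth_mem by auto
      moreover have "L ! i \<noteq> L ! k" using ik L(1) nth_eq_iff_index_eq by fastforce
      ultimately show ?thesis using canon_iff_prec[OF j] by blast
    qed
    then show ?thesis unfolding sorted_wrt_iff_nth_less by blast
  qed
  then have "(\<lambda>L. distinct L \<and> set L = strip j \<and> sorted_wrt (canon j) L) =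
      (\<lambda>L. distinct L \<and> set L = strip j \<and> sorted_wrt (\<sqsubset>) L)"
    by (intro ext) blast
  then show ?thesis unfolding canon_list_def sorted_list_def by simp
qed

text \<open>The edges of the composite of the first j strips.\<close>
definition upper where
  "upper j = {e \<in> E. ys j < real (level (src e))}"

lemma upper_subset: "upper j \<subseteq> E"
  unfolding upper_def by auto

lemma strip_one_eq_upper: "strip 1 = upper 1"
proof -
  have "level (tgt e) \<le> card E" if "e \<in> E" for e
    using that internal_level_bounds non_internal_tgt by (cases "internal (tgt e)") auto
  then show ?thesis unfolding upper_def using strip_iff cut_top by force
qed

lemma upper_Suc: assumes "1 \<le> j" "j < n" shows "upper (Suc j) = upper j \<union> strip (Suc j)"
proof
  show "upper (Suc j) \<subseteq> upper j \<union> strip (Suc j)"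
  proof
    fix e assume "e \<in> upper (Suc j)"
    then have e: "e \<in> E" "ys (Suc j) < real (level (src e))" unfolding upper_def by auto
    moreover have "real (level (src e)) \<noteq> ys j" using cut_avoids_vertices assms src_in_V e by auto
    moreover have "level (tgt e) < level (src e)" using level_tgt_less_src e by auto
    ultimately show "e \<in> upper j \<union> strip (Suc j)" by (auto simp: upper_def strip_iff)
  qed
  show "upper j \<union> strip (Suc j) \<subseteq> upper (Suc j)"
    using cut_decreasing[OF assms(2)] by (auto simp: upper_def strip_iff)
qed

lemma upper_last: "upper n = E"
  using level_tgt_less_src cut_bottom unfolding upper_def by fastforce

lemma cut_edges_iff:
  "e \<in> cut_edges E src tgt vertex_point ys j \<longleftrightarrow>
     e \<in> E \<and> real (level (tgt e)) < ys j \<and> ys j < real (level (src e))"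
  unfolding cut_edges_def snd_vertex_point by auto


context
  fixes j assumes j: "1 \<le> j" "j < n"
begin

lemma cut_level_avoids: "v \<in> V \<Longrightarrow> real (level v) \<noteq> ys j"
  using cut_avoids_vertices j by auto

lemma upper_Int_strip_iff:
  "e \<in> upper j \<inter> strip (Suc j) \<longleftrightarrow>
     e \<in> E \<and> real (level (tgt e)) < ys j \<and> ys j < real (level (src e))"
  using cut_decreasing[OF j(2)] by (auto simp: upper_def strip_iff)

lemma upper_diff_strip:
  assumes "e \<in> upper j - strip (Suc j)" shows "ys j < real (level (tgt e))"
proof -
  have "e \<in> E" "\<not> real (level (tgt e)) < ys j"
    using assms cut_decreasing[OF j(2)] by (auto simp: upper_def strip_iff)
  then show ?thesis using cut_level_avoids[OF tgt_in_V] by force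
qed

lemma strip_diff_upper:
  assumes "e \<in> strip (Suc j) - upper j"
  shows "e \<in> E" "centre (Suc j) (src e)"
proof -
  have e: "e \<in> E" "ys (Suc j) < real (level (src e))" "\<not> ys j < real (level (src e))"
    using assms by (auto simp: upper_def strip_iff)
  then have below: "real (level (src e)) < ys j" using cut_level_avoids[OF src_in_V] by force
  have "ys j < real (card E) + 1" using cut_antimono[of 0 j] j cut_top by auto
  then have "internal (src e)" using below non_internal_src[OF e(1)] by fastforce
  then show "e \<in> E" "centre (Suc j) (src e)" using e below centre_iff by auto
qed

lemma upper_ends_with_crossing:
  assumes a: "a \<in> upper j - strip (Suc j)"
  shows "\<exists>z\<in>upper j \<inter> strip (Suc j). a \<sqsubset> z"
proof -
  obtain z where z: "z \<in> upper j" "\<And>x. x \<in> upper j \<Longrightarrow> x \<noteq> z \<Longrightarrow> x \<sqsubset> z"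
    using exists_rank_max[OF upper_subset] a by blast
  have "z \<in> strip (Suc j)"
  proof (rule ccontr)
    assume "z \<notin> strip (Suc j)"
    then have above: "ys j < real (level (tgt z))" using upper_diff_strip z(1) by blast
    have zE: "z \<in> E" using z(1) upper_subset by auto
    have "0 < ys j" using cut_antimono[of j n] j cut_bottom by auto
    then have "internal (tgt z)" using above non_internal_tgt[OF zE] by fastforce
    then obtain c where c: "c \<in> E" "src c = tgt z" using internal_iff Out_iff by blast
    then have "z \<sqsubset> c" using reach_consecutive reach_imp_prec zE by auto
    moreover have "c \<in> upper j" using c above unfolding upper_def by auto
    ultimately show False using z(2)[of c] prec_asym prec_irrefl by blast
  qed
  moreover have "a \<noteq> z" using a \<open>z \<in> strip (Suc j)\<close> by auto
  ultimately show ?thesis using z a by blast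
qed

lemma strip_starts_with_crossing:
  assumes b: "b \<in> strip (Suc j) - upper j"
  shows "\<exists>z\<in>upper j \<inter> strip (Suc j). z \<sqsubset> b"
proof -
  obtain z where z: "z \<in> strip (Suc j)" "\<And>x. x \<in> strip (Suc j) \<Longrightarrow> x \<noteq> z \<Longrightarrow> z \<sqsubset> x"
    using exists_rank_min[OF strip_subset] b by blast
  have "z \<in> upper j"
  proof (rule ccontr)
    assume "z \<notin> upper j"
    then have zE: "z \<in> E" and centre: "centre (Suc j) (src z)"
      using strip_diff_upper z(1) by blast+
    then obtain a where a: "a \<in> E" "tgt a = src z" using centre_iff internal_iff In_iff by blast
    then have "a \<sqsubset> z" using reach_consecutive reach_imp_prec zE by auto
    moreover have "a \<in> strip (Suc j)"
      using a centre level_tgt_plus_one_le_src[OF a(1)] by (auto simp: centre_iff strip_iff)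
    ultimately show False using z(2)[of a] prec_asym prec_irrefl by blast
  qed
  moreover have "b \<noteq> z" using b \<open>z \<in> upper j\<close> by auto
  ultimately show ?thesis using z b by blast
qed

lemma In_centre_crossing:
  assumes centre: "centre (Suc j) u" and a: "a \<in> In u"
  shows "a \<in> upper j \<inter> strip (Suc j)"
proof -
  have aE: "a \<in> E" "tgt a = u" using a In_iff by auto
  have u_below: "real (level u) < ys j" using centre centre_iff by auto
  have "\<not> centre (Suc j) (src a)"
    using centre_unique[of "Suc j"] centre src_ne_tgt[OF aE(1)] aE(2) j
    by auto
  then have "ys j \<le> real (level (src a))"
    using strip_src_above[of "Suc j" a] aE centre level_tgt_plus_one_le_src[OF aE(1)] j
    by (force simp: centre_iff strip_iff)
  then show ?thesis
    using cut_level_avoids[OF src_in_V[OF aE(1)]] aE u_below upper_Int_strip_iff by auto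
qed

text \<open>Some in-edge z of the centre u = src p satisfies q \<sqsubset> z: otherwise (P2), applied to an
  in-edge a \<sqsubset> q \<sqsubset> p with a \<rightarrow> p, gives a \<rightarrow> q, impossible by the levels, or q \<rightarrow> p, whose last
  edge enters u after q.\<close>
lemma crossing_between:
  assumes q: "q \<in> upper j - strip (Suc j)" and p: "p \<in> strip (Suc j) - upper j" and qp: "q \<sqsubset> p"
  shows "\<exists>z\<in>upper j \<inter> strip (Suc j). q \<sqsubset> z \<and> z \<sqsubset> p"
proof -
  define u where "u = src p"
  have pE: "p \<in> E" and centre: "centre (Suc j) u"
    using strip_diff_upper[OF p] unfolding u_def by auto
  have qE: "q \<in> E" and q_above: "ys j < real (level (tgt q))"
    using q upper_subset upper_diff_strip by auto
  have u_below: "real (level u) < ys j" using centre centre_iff by auto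
  have "\<exists>z\<in>In u. q \<sqsubset> z"
  proof (rule ccontr)
    assume none: "\<not> (\<exists>z\<in>In u. q \<sqsubset> z)"
    obtain a where a: "a \<in> In u" using centre centre_iff internal_iff by auto
    have aE: "a \<in> E" "tgt a = u" using a In_iff by auto
    have "a \<noteq> q" using In_centre_crossing[OF centre a] q by auto
    then have "a \<sqsubset> q" using none a prec_total[OF aE(1) qE] by auto
    moreover have "reach a p" using reach_consecutive aE pE u_def by auto
    ultimately have "reach a q \<or> reach q p" using prec_between_reach qp by blast
    then show False
    proof
      assume "reach a q"
      then have "real (level (src q)) \<le> real (level u)" using aE(2) reach_level[of a q] by simp
      moreover have "real (level (tgt q)) < real (level (src q))" using level_tgt_less_src[OF qE]
        by simp
      ultimately show False using q_above u_below by linarith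
    next
      assume "reach q p"
      then have "tgt q = u \<or> (\<exists>x. x \<in> E \<and> tgt x = u \<and> reach q x)"
        unfolding u_def by (rule reach_last_step)
      then show False
      proof
        assume "tgt q = u"
        then show False using In_centre_crossing[OF centre, of q] q qE In_iff by auto
      next
        assume "\<exists>x. x \<in> E \<and> tgt x = u \<and> reach q x"
        then obtain x where "x \<in> In u" "reach q x" using In_iff by auto
        then show False using none reach_imp_prec by blast
      qed
    qed
  qed
  then obtain z where z: "z \<in> In u" "q \<sqsubset> z" by blast
  then have "z \<sqsubset> p" using reach_consecutive reach_imp_prec pE In_iff u_def by auto
  then show ?thesis using z In_centre_crossing[OF centre] by blast
qed

lemma composable_upper_strip:
  "composable (cut_edges E src tgt vertex_point ys j) (upper j) (strip (Suc j))"
proof -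
  let ?Z = "cut_edges E src tgt vertex_point ys j"
  have "upper j \<inter> ?Z = upper j \<inter> strip (Suc j)" "strip (Suc j) \<inter> ?Z = upper j \<inter> strip (Suc j)"
    using upper_Int_strip_iff cut_edges_iff by (auto simp: upper_def)
  then show ?thesis
    unfolding composable_def
    using upper_subset strip_subset upper_ends_with_crossing strip_starts_with_crossing
      crossing_between by blast
qed

end

lemma stack_order_eq_upper:
  "Suc k \<le> n \<Longrightarrow>
     stack_order (canon_list V E src tgt vertex_point edge_arc ys) (cut_edges E src tgt vertex_point
       ys) (Suc k)
       = sorted_list (upper (Suc k))"
proof (induction k)
  case 0
  then show ?case using canon_list_eq_sorted_list[of 1] strip_one_eq_upper by simp
next
  case (Suc k)
  then have "Suc (Suc k) \<in> {1..n}" by auto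
  then show ?case
    using Suc canon_list_eq_sorted_list compose_order_sorted_list[OF composable_upper_strip]
      upper_Suc[of "Suc k"]
    by simp
qed

lemma embedding_order_eq_prec: "embedding_order V E src tgt vertex_point edge_arc n ys = prec"
proof -
  obtain k where "n = Suc k" using cut_ge_one by (cases n) auto
  then show ?thesis
    unfolding embedding_order_def
    using stack_order_eq_upper[of k] upper_last list_order_sorted_list by simp
qed

end

context planar_progressive
begin

text \<open>Cut lines at the half-integers: every open strip has height at most one.\<close>
definition uniform_cut :: "nat \<Rightarrow> real" where
  "uniform_cut j = (if j = 0 then real (card E) + 1
     else if card E + 2 \<le> j then 0 else real (card E) + 3/2 - real j)"

lemma valid_uniform_cut:
  "valid_cut V E src tgt vertex_point 0 (real (card E) + 1) (card E + 2) uniform_cut"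
  unfolding valid_cut_def snd_vertex_point
proof (intro conjI allI impI ballI)
  show "1 \<le> card E + 2" "uniform_cut 0 = real (card E) + 1" "uniform_cut (card E + 2) = 0"
    unfolding uniform_cut_def by simp_all
  show "uniform_cut (Suc j) < uniform_cut j" if "j < card E + 2" for j
    using that unfolding uniform_cut_def by auto
  show "real (level v) \<noteq> uniform_cut j" if "0 < j \<and> j < card E + 2" for j v
  proof
    assume "real (level v) = uniform_cut j"
    then have "real (2 * level v + 2 * j) = real (2 * card E + 3)"
      using that unfolding uniform_cut_def by auto
    then have "2 * level v + 2 * j = 2 * card E + 3" by (simp only: of_nat_eq_iff)
    then show False by presburger
  qed
  show "v = w" if "j \<in> {1..card E + 2}"
    and vw: "internal v \<and> internal w \<and>
      uniform_cut j < real (level v) \<and> real (level v) < uniform_cut (j - 1) \<and>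
      uniform_cut j < real (level w) \<and> real (level w) < uniform_cut (j - 1)" for j v w
  proof -
    have "uniform_cut (j - 1) - uniform_cut j \<le> 1"
      using that unfolding uniform_cut_def by (auto simp: of_nat_diff)
    then have "level v = level w" using vw
      by (cases "level v" "level w" rule: linorder_cases) linarith+
    then show ?thesis using level_inj_internal vw by blast
  qed
qed

end

theorem proposition1p2:
  fixes V :: "'v set" and E :: "'e set" and src tgt :: "'e \<Rightarrow> 'v"
    and prec :: "('e \<times> 'e) set"
  assumes "progressive_graph V E src tgt"
    and "planar_order E src tgt prec"
  shows "\<exists>(pos :: 'v \<Rightarrow> point) (gam :: 'e \<Rightarrow> real \<Rightarrow> point) a b c d.
           upward_BP_embedding V E src tgt pos gam a b c d \<and>
           (\<exists>n ys. valid_cut V E src tgt pos c d n ys) \<and>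
           (\<forall>n ys. valid_cut V E src tgt pos c d n ys \<longrightarrow>
                   prec = embedding_order V E src tgt pos gam n ys)"
proof -
  interpret planar_progressive V E src tgt prec
    using assms by unfold_locales
  have "prec = embedding_order V E src tgt vertex_point edge_arc n ys"
    if "valid_cut V E src tgt vertex_point 0 (real (card E) + 1) n ys" for n ys
  proof -
    interpret planar_progressive_cut V E src tgt prec n ys
      using that by unfold_locales
    show ?thesis using embedding_order_eq_prec by simp
  qed
  then show ?thesis
    using upward_BP_embedding_construction valid_uniform_cut by blast
qed

end
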